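(* Let $q$ be a prime power, $n$ a positive integer, $m$ an integer with $0\le m\le n-1$, $a\in\mathbb F_{q^{2n}}^*$ and $L(x)=ax^{q^{2m}}$. For $c\in\mathbb F_{q^2}$ let $N_c$ be the number of $u\in\mathbb F_{q^{2n}}$ with $\mathrm{Tr}(uL(u^q))+c=0$. Let $d=\gcd(2m+1,n)$, $\alpha=\big(-a^{q^{2m+1}-1}\big)^{\frac{q^{2n}-1}{q^{2d}-1}}$ and $Q=q+1-\gcd(n/d,q+1)(q^d+1)$. If $\alpha^{\frac{q+1}{\gcd(n/d,q+1)}}=1$, then \[N_c-q^{2(n-1)}=\begin{cases}(-1)^n(q-1)q^{n-2}Q&\text{if }c=0,\\(-1)^{n-1}q^{n+d-1}+(-1)^{n-1}q^{n-2}Q&\text{if }(-c^{q-1})^{n/d}=\alpha,\\(-1)^nq^{n-1}+(-1)^{n-1}q^{n-2}Q&\text{otherwise.}\end{cases}\] If $\alpha^{\frac{q+1}{\gcd(n/d,q+1)}}\ne1$, then \[N_c-q^{2(n-1)}=\begin{cases}(-1)^n(q^2-1)q^{n-2}&\text{if }c=0,\\(-1)^{n-1}q^{n-2}&\text{otherwise.}\end{cases}\] In particular, $|N_0-q^{2(n-1)}|=(q^2-1)q^{n+2m-1}$ if and only if $(2m+1)(q+1)$ divides $n$ and $\alpha=1$.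
   Context: $\mathrm{Tr}$ is the trace map $\mathbb F_{q^{2n}}\to\mathbb F_{q^2}$. *)

theory Defs
  imports Complex_Main "HOL-Computational_Algebra.Primes"
begin

definition Tr :: "nat \<Rightarrow> nat \<Rightarrow> 'a::field \<Rightarrow> 'a" where
  "Tr q n x = (\<Sum>i<n. x ^ (q ^ (2 * i)))"

definition Lmap :: "nat \<Rightarrow> nat \<Rightarrow> 'a::field \<Rightarrow> 'a \<Rightarrow> 'a" where
  "Lmap q m a x = a * x ^ (q ^ (2 * m))"

definition Ncount :: "nat \<Rightarrow> nat \<Rightarrow> nat \<Rightarrow> 'a::{finite,field} \<Rightarrow> 'a \<Rightarrow> nat" where
  "Ncount q n m a c = card {u::'a. Tr q n (u * Lmap q m a (u ^ q)) + c = 0}"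

definition dval :: "nat \<Rightarrow> nat \<Rightarrow> nat" where
  "dval m n = gcd (2 * m + 1) n"

definition alpha :: "nat \<Rightarrow> nat \<Rightarrow> nat \<Rightarrow> 'a::field \<Rightarrow> 'a" where
  "alpha q n m a = (- (a ^ (q ^ (2 * m + 1) - 1))) ^ ((q ^ (2 * n) - 1) div (q ^ (2 * dval m n) - 1))"

definition gval :: "nat \<Rightarrow> nat \<Rightarrow> nat \<Rightarrow> nat" where
  "gval q n m = gcd (n div dval m n) (q + 1)"

definition Qval :: "nat \<Rightarrow> nat \<Rightarrow> nat \<Rightarrow> real" where
  "Qval q n m = real q + 1 - real (gval q n m) * (real q ^ dval m n + 1)"

end

theory Submission
  imports "HOL-Algebra.Algebraic_Closure_Type" "HOL-Algebra.Multiplicative_Group"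
    "HOL-Number_Theory.Number_Theory" "HOL-Computational_Algebra.Polynomial"
    (* imported last, so that prime means Factorial_Ring.prime and not Divisibility.prime *)
    Defs
begin

(*
  Write K = F_{q^2} (Fq2 below), T(x) = x + x^q for the trace K -> F_q and
  f(u) = Tr(u L(u^q)).
  For l in K^*, B_l(u, v) = l Tr(a u^{q^{2m+1}} v) + (l Tr(a v^{q^{2m+1}} u))^q is a
  Hermitian form on F_{q^{2n}} over K with diagonal B_l(u, u) = T(l f(u)).

  Splitting off anisotropic vectors one at a time shows that a Hermitian form on a
  K-space W with radical R and |W| = |R| q^{2r} has Z isotropic vectors, where
  q Z = |W| + (-1)^r (q - 1) q^r |R|, and that its level sets B(w, w) = t for t in F_q^*
  all have the same size.  The radical of B_l is the kernel of a linearised binomial: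
  it has q^{2d} elements if alpha (l^{q-1})^{n/d} = 1 and only one otherwise, and a
  count in the cyclic group K^* shows that there are (q - 1) gcd(n/d, q + 1) such l
  if alpha^{(q+1)/gcd(n/d, q+1)} = 1 and none otherwise.

  Since y in K vanishes iff T(l y) = 0 for all l in K, summing
  #{u. T(l (f(u) + c)) = 0} over l in K^* gives (q^2 - 1) N_c + (q - 1) (q^{2n} - N_c),
  while each summand is a level set of B_l.
*)

lemma gcd_power_diff_one:
  fixes x :: nat assumes "x \<ge> 1"
  shows "gcd (x ^ a - 1) (x ^ b - 1) = x ^ gcd a b - 1"
proof (induction "a + b" arbitrary: a b rule: less_induct)
  case less
  show ?case
  proof (cases "a = 0 \<or> b = 0")
    case True thus ?thesis by auto
  next
    case False
    have step: "gcd (x ^ a - 1) (x ^ b - 1) = gcd (x ^ (a - b) - 1) (x ^ b - 1)"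
      if "b \<le> a" for a b
    proof -
      have "x ^ a = x ^ (a - b) * x ^ b" using that by (simp flip: power_add)
      moreover have "x ^ b \<ge> 1" "x ^ (a - b) \<ge> 1" using assms by auto
      ultimately have "x ^ a - 1 = x ^ (a - b) * (x ^ b - 1) + (x ^ (a - b) - 1)"
        by (simp add: algebra_simps diff_mult_distrib2)
      thus ?thesis by (metis gcd.commute gcd_add_mult)
    qed
    show ?thesis
    proof (cases "b \<le> a")
      case True
      have "gcd (x ^ a - 1) (x ^ b - 1) = x ^ gcd (a - b) b - 1"
        using step[OF True] less False by simp
      also have "gcd (a - b) b = gcd a b" using True by (simp add: gcd_diff1_nat)
      finally show ?thesis .
    next
      case b_gt: False
      have "gcd (x ^ a - 1) (x ^ b - 1) = gcd (x ^ (b - a) - 1) (x ^ a - 1)"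
        using step[of a b] b_gt by (simp add: gcd.commute)
      also have "\<dots> = x ^ gcd (b - a) a - 1" using less False b_gt by simp
      also have "gcd (b - a) a = gcd a b"
        using b_gt by (metis gcd.commute gcd_diff1_nat nat_le_linear)
      finally show ?thesis .
    qed
  qed
qed

lemma nat_power_diff_one_eq:
  fixes x :: nat assumes "x \<ge> 1"
  shows "x ^ t - 1 = (x - 1) * (\<Sum>j<t. x ^ j)"
proof -
  have "int (x ^ t - 1) = int x ^ t - 1" using assms by (simp add: of_nat_diff)
  also have "\<dots> = (int x - 1) * (\<Sum>j<t. int x ^ j)" by (rule power_diff_1_eq)
  also have "\<dots> = int ((x - 1) * (\<Sum>j<t. x ^ j))" using assms by (simp add: of_nat_diff)
  finally show ?thesis using of_nat_eq_iff by blast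
qed

lemma card_less_mod_eq:
  fixes P M r :: nat
  assumes "M > 0" "M dvd P" "r < M"
  shows "card {j. j < P \<and> j mod M = r} = P div M"
proof -
  have "{j. j < P \<and> j mod M = r} = (\<lambda>i. r + M * i) ` {..<P div M}"
  proof (intro equalityI subsetI)
    fix j assume j: "j \<in> {j. j < P \<and> j mod M = r}"
    hence "j = r + M * (j div M)" using div_mult_mod_eq[of j M] by (simp add: mult.commute)
    moreover have "j div M < P div M"
      using j assms by (metis dvd_div_mult_self less_mult_imp_div_less mem_Collect_eq)
    ultimately show "j \<in> (\<lambda>i. r + M * i) ` {..<P div M}" by blast
  next
    fix j assume "j \<in> (\<lambda>i. r + M * i) ` {..<P div M}"
    then obtain i where i: "i < P div M" "j = r + M * i" by auto
    have "r + M * i < M * (i + 1)" using assms by simp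
    also have "\<dots> \<le> M * (P div M)" using i by (intro mult_le_mono2) simp
    also have "\<dots> = P" using assms by simp
    finally show "j \<in> {j. j < P \<and> j mod M = r}" using i assms by simp
  qed
  moreover have "inj_on (\<lambda>i. r + M * i) {..<P div M}" using assms by (auto simp: inj_on_def)
  ultimately show ?thesis by (simp add: card_image)
qed

lemma card_cong_solutions:
  fixes P e k :: nat
  assumes P: "P > 0"
  shows "card {j. j < P \<and> [e * j = k] (mod P)} = (if gcd e P dvd k then gcd e P else 0)"
proof (cases "gcd e P dvd k")
  case False
  have "{j. j < P \<and> [e * j = k] (mod P)} = {}"
  proof (rule ccontr)
    assume "{j. j < P \<and> [e * j = k] (mod P)} \<noteq> {}"
    then obtain j where "[e * j = k] (mod P)" by auto
    hence "gcd e P dvd e * j \<longleftrightarrow> gcd e P dvd k"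
      by (meson cong_dvd_iff gcd_dvd2 dvd_trans cong_dvd_modulus_nat)
    thus False using False by simp
  qed
  thus ?thesis using False by simp
next
  case True
  define g where "g = gcd e P"
  have g0: "g > 0" using P by (simp add: g_def)
  obtain P' where P': "P = g * P'" using g_def by (metis dvd_def gcd_dvd2)
  obtain e' where e': "e = g * e'" using g_def by (metis dvd_def gcd_dvd1)
  have P'0: "P' > 0" using P P' by simp
  have cop: "coprime e' P'"
    using g0 e' P' g_def by (metis gcd_mult_distrib_nat mult.right_neutral mult_left_cancel
        coprime_iff_gcd_eq_1 less_irrefl)
  obtain j0 where j0: "[e * j0 = k] (mod P)" using cong_solve_dvd_nat True by blast
  have solutions: "[e * j = k] (mod P) \<longleftrightarrow> j mod P' = j0 mod P'" for j
  proof -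
    have "[e * j = k] (mod P) \<longleftrightarrow> [e * j = e * j0] (mod P)"
      using j0 by (meson cong_sym cong_trans)
    also have "\<dots> \<longleftrightarrow> int P dvd int e * (int j - int j0)"
      by (metis cong_int_iff cong_iff_dvd_diff of_nat_mult right_diff_distrib)
    also have "\<dots> \<longleftrightarrow> int P' dvd int e' * (int j - int j0)"
      using g0 by (simp add: P' e' mult.assoc)
    also have "\<dots> \<longleftrightarrow> int P' dvd (int j - int j0)"
      using cop by (simp add: coprime_dvd_mult_right_iff coprime_commute)
    also have "\<dots> \<longleftrightarrow> j mod P' = j0 mod P'"
      by (metis cong_int_iff cong_iff_dvd_diff cong_def)
    finally show ?thesis .
  qed
  have "card {j. j < P \<and> [e * j = k] (mod P)} = card {j. j < P \<and> j mod P' = j0 mod P'}"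
    using solutions by simp
  also have "\<dots> = g" using P'0 P' by (subst card_less_mod_eq) auto
  finally show ?thesis using True g_def by simp
qed

lemma bound_attained_if_sum_eq:
  fixes f :: "'b \<Rightarrow> nat"
  assumes "finite A" "\<And>a. a \<in> A \<Longrightarrow> f a \<le> b" "sum f A = card A * b" "a \<in> A"
  shows "f a = b"
proof (rule ccontr)
  assume "f a \<noteq> b"
  hence "f a < b" using assms by force
  hence "sum f A < sum (\<lambda>_. b) A" using assms by (intro sum_strict_mono_ex1) auto
  thus False using assms by simp
qed

lemma card_eq_sum_card_fibres:
  assumes "finite A" "finite B" "f ` A \<subseteq> B"
  shows "card A = (\<Sum>b\<in>B. card {a\<in>A. f a = b})"
proof -
  have "A = (\<Union>b\<in>B. {a\<in>A. f a = b})" using assms by auto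
  hence "card A = card (\<Union>b\<in>B. {a\<in>A. f a = b})" by simp
  also have "\<dots> = (\<Sum>b\<in>B. card {a\<in>A. f a = b})"
    using assms by (intro card_UN_disjoint) auto
  finally show ?thesis .
qed

lemma card_roots_sum_powers_le:
  fixes A :: "nat set" and c :: "'a::field"
  assumes "finite A" "A \<noteq> {}" "Max A > 0"
  shows "card {x::'a. (\<Sum>i\<in>A. x ^ i) = c} \<le> Max A"
proof -
  define P :: "'a poly" where "P = (\<Sum>i\<in>A. monom 1 i) - [:c:]"
  have "coeff P (Max A) = (\<Sum>i\<in>A. (if i = Max A then 1 else 0)) - (if Max A = 0 then c else 0)"
    by (simp add: P_def coeff_sum) (cases "Max A"; simp)
  also have "\<dots> = 1" using assms by (simp add: sum.delta)
  finally have "P \<noteq> 0" by auto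
  have "degree (\<Sum>i\<in>A. monom (1::'a) i) \<le> Max A"
    using assms(1) by (intro degree_sum_le) (auto intro: order.trans[OF degree_monom_le] Max_ge)
  hence "degree P \<le> Max A" unfolding P_def
    by (intro order.trans[OF degree_diff_le]) auto
  moreover have "{x::'a. (\<Sum>i\<in>A. x ^ i) = c} = {x. poly P x = 0}"
    by (auto simp: P_def poly_sum poly_monom)
  ultimately show ?thesis using card_poly_roots_bound[OF \<open>P \<noteq> 0\<close>] by simp
qed

lemma power_eq_self_iff:
  "(x::'a::field) \<noteq> 0 \<Longrightarrow> e \<ge> 1 \<Longrightarrow> x ^ e = x \<longleftrightarrow> x ^ (e - 1) = 1"
  by (metis Suc_diff_1 power_Suc less_le_trans zero_less_one mult_cancel_left1)

lemma nat_pow_ring_of_type_algebra: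
  "x [^]\<^bsub>ring_of_type_algebra\<^esub> (i::nat) = (x::'a::field) ^ i"
  by (induction i) (simp_all add: ring_of_type_algebra_def)

lemma field_power_card_minus_one:
  fixes x :: "'a::{finite,field}"
  assumes "x \<noteq> 0"
  shows "x ^ (card (UNIV :: 'a set) - 1) = 1"
proof -
  let ?R = "ring_of_type_algebra :: 'a ring"
  interpret field ?R by (rule field_from_type_algebra)
  interpret G: group "Multiplicative_Group.mult_of ?R" by (rule field_mult_group)
  have "x [^]\<^bsub>Multiplicative_Group.mult_of ?R\<^esub> Coset.order (Multiplicative_Group.mult_of ?R) =
      \<one>\<^bsub>Multiplicative_Group.mult_of ?R\<^esub>"
    using assms by (intro G.pow_order_eq_1) (simp add: ring_of_type_algebra_def)
  moreover have "Coset.order (Multiplicative_Group.mult_of ?R) = card (UNIV :: 'a set) - 1"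
    by (simp add: Coset.order_def ring_of_type_algebra_def card_Diff_singleton)
  ultimately show ?thesis
    by (simp add: Multiplicative_Group.nat_pow_mult_of nat_pow_ring_of_type_algebra) (simp add: ring_of_type_algebra_def)
qed

lemma field_has_generator:
  "\<exists>g::'a::{finite,field}. g \<noteq> 0 \<and> (\<forall>x. x \<noteq> 0 \<longrightarrow> (\<exists>i. x = g ^ i))"
proof -
  let ?R = "ring_of_type_algebra :: 'a ring"
  interpret field ?R by (rule field_from_type_algebra)
  obtain g where g: "g \<in> carrier (Multiplicative_Group.mult_of ?R)"
    "carrier (Multiplicative_Group.mult_of ?R) = {g [^]\<^bsub>?R\<^esub> i |i::nat. i \<in> UNIV}"
    using finite_field_mult_group_has_gen by (auto simp: ring_of_type_algebra_def)
  have "carrier (Multiplicative_Group.mult_of ?R) = UNIV - {0}"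
    by (simp add: ring_of_type_algebra_def)
  thus ?thesis using g unfolding nat_pow_ring_of_type_algebra by (intro exI[of _ g]) auto
qed

context
  fixes g :: "'a::field" and P :: nat
  assumes order_g: "\<And>i. g ^ i = 1 \<longleftrightarrow> P dvd i" and P_pos: "P > 0"
begin

lemma cyclic_generator_ne_zero: "g \<noteq> 0"
  using order_g[of P] P_pos by (metis dvd_refl power_0_left zero_neq_one neq0_conv)

lemma cyclic_power_eq_iff: "g ^ i = g ^ j \<longleftrightarrow> [i = j] (mod P)"
proof -
  have reduce: "g ^ i = g ^ (i mod P)" for i
  proof -
    have "g ^ i = (g ^ P) ^ (i div P) * g ^ (i mod P)"
      by (metis div_mult_mod_eq power_add power_mult mult.commute)
    thus ?thesis using order_g[of P] by simp
  qed
  have below: "a = b" if "g ^ a = g ^ b" "a \<le> b" "b < P" for a b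
  proof -
    have "g ^ b = g ^ a * g ^ (b - a)" using that(2) by (simp flip: power_add)
    hence "P dvd b - a" using that(1) cyclic_generator_ne_zero order_g by simp
    moreover have "b - a < P" using that by linarith
    ultimately show "a = b" using that(2) nat_dvd_not_less by fastforce
  qed
  have "g ^ i = g ^ j \<longleftrightarrow> g ^ (i mod P) = g ^ (j mod P)" using reduce by metis
  also have "\<dots> \<longleftrightarrow> i mod P = j mod P"
    using below[of "i mod P" "j mod P"] below[of "j mod P" "i mod P"] P_pos
    by (metis mod_less_divisor nat_le_linear)
  finally show ?thesis by (simp add: cong_def)
qed

lemma inj_on_cyclic_powers: "inj_on (\<lambda>j. g ^ j) {..<P}"
  by (auto simp: inj_on_def cyclic_power_eq_iff cong_def)

lemma card_cyclic_roots:
  assumes "c \<in> (\<lambda>j. g ^ j) ` {..<P}"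
  shows "card {x \<in> (\<lambda>j. g ^ j) ` {..<P}. x ^ e = c} =
    (if c ^ (P div gcd e P) = 1 then gcd e P else 0)"
proof -
  obtain k where c: "c = g ^ k" using assms by auto
  have root_test: "c ^ (P div gcd e P) = 1 \<longleftrightarrow> gcd e P dvd k"
  proof -
    obtain P' where P': "P = gcd e P * P'" by (metis dvd_def gcd_dvd2)
    have "P div gcd e P = P'" using P' P_pos by (metis gcd_eq_0_iff neq0_conv nonzero_mult_div_cancel_left)
    hence "c ^ (P div gcd e P) = 1 \<longleftrightarrow> P dvd k * P'"
      using c by (simp add: order_g flip: power_mult)
    moreover have "P' > 0" using P' P_pos by (metis gr0I mult_0_right)
    moreover have "gcd e P * P' dvd k * P' \<longleftrightarrow> gcd e P dvd k" using \<open>P' > 0\<close> by simp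
    ultimately show ?thesis using P' by metis
  qed
  have "{x \<in> (\<lambda>j. g ^ j) ` {..<P}. x ^ e = c} = (\<lambda>j. g ^ j) ` {j. j < P \<and> [e * j = k] (mod P)}"
    using c by (auto simp: cyclic_power_eq_iff mult.commute simp flip: power_mult)
  moreover have "inj_on (\<lambda>j. g ^ j) {j. j < P \<and> [e * j = k] (mod P)}"
    using inj_on_cyclic_powers by (rule inj_on_subset) auto
  ultimately show ?thesis using card_cong_solutions[OF P_pos, of e k] root_test
    by (simp add: card_image)
qed

end

locale field_q2n =
  fixes q n p k :: nat and TY :: "'a::{finite,field} itself"
  assumes p_prime: "prime p" and k_pos: "k > 0" and q_def: "q = p ^ k"
    and card_field: "card (UNIV :: 'a set) = q ^ (2 * n)" and n_pos: "n > 0"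
begin

lemma q_ge_2: "q \<ge> 2"
proof -
  have "p \<ge> 2" using p_prime prime_ge_2_nat by blast
  hence "p ^ k \<ge> p ^ 1" using k_pos by (intro power_increasing) auto
  thus ?thesis using \<open>p \<ge> 2\<close> q_def by simp
qed

lemma q_power_pos: "q ^ j > 0" using q_ge_2 by simp

lemma CHAR_eq: "CHAR('a) = p"
proof -
  have fin: "finite (UNIV :: 'a set)" by simp
  have "prime CHAR('a)" using prime_CHAR_semidom finite_imp_CHAR_pos[OF fin] by blast
  moreover have "CHAR('a) dvd p ^ (k * (2 * n))"
    using CHAR_dvd_CARD[where 'a='a] card_field q_def by (simp add: power_mult)
  ultimately show ?thesis using p_prime prime_dvd_power primes_dvd_imp_eq by blast
qed

lemma frob_add: "(x + y :: 'a) ^ (q ^ j) = x ^ (q ^ j) + y ^ (q ^ j)"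
proof -
  have "q ^ j = CHAR('a) ^ (k * j)" using CHAR_eq q_def by (simp add: power_mult)
  thus ?thesis using freshmans_dream' CHAR_eq p_prime by blast
qed

lemma frob_sum: "(sum f A :: 'a) ^ (q ^ j) = (\<Sum>i\<in>A. f i ^ (q ^ j))"
proof -
  have "q ^ j = CHAR('a) ^ (k * j)" using CHAR_eq q_def by (simp add: power_mult)
  thus ?thesis using freshmans_dream_sum' CHAR_eq p_prime by blast
qed

lemma frob_zero: "(0::'a) ^ (q ^ j) = 0" using q_power_pos by simp

lemma frob_neg: "(- x :: 'a) ^ (q ^ j) = - (x ^ (q ^ j))"
proof -
  have "(x + - x) ^ (q ^ j) = 0" using frob_zero by simp
  thus ?thesis unfolding frob_add by (simp add: add_eq_0_iff)
qed

lemma frob1_add: "(x + y :: 'a) ^ q = x ^ q + y ^ q"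
  using frob_add[of x y 1] by simp

lemma frob1_neg: "(- x :: 'a) ^ q = - (x ^ q)"
  using frob_neg[of x 1] by simp

lemma frob_2n: "(x::'a) ^ (q ^ (2 * n)) = x"
proof (cases "x = 0")
  case False
  have "Suc (q ^ (2 * n) - 1) = q ^ (2 * n)" using q_power_pos by simp
  thus ?thesis using field_power_card_minus_one[OF False] card_field by (metis power_Suc mult_1_right)
qed (use q_ge_2 in simp)

definition units_order :: nat where "units_order = q ^ (2 * n) - 1"

lemma units_order_pos: "units_order > 0"
proof -
  have "q ^ (2 * n) > q ^ 0" using q_ge_2 n_pos by (intro power_strict_increasing) auto
  thus ?thesis by (simp add: units_order_def)
qed

lemma power_units_order: "(x::'a) \<noteq> 0 \<Longrightarrow> x ^ units_order = 1"
  using field_power_card_minus_one[of x] by (simp add: card_field units_order_def)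

lemma card_nonzero: "card {x::'a. x \<noteq> 0} = units_order"
proof -
  have "{x::'a. x \<noteq> 0} = UNIV - {0}" by auto
  thus ?thesis by (simp add: card_Diff_singleton card_field units_order_def)
qed

definition prim :: 'a where
  "prim = (SOME g::'a. g \<noteq> 0 \<and> (\<forall>x. x \<noteq> 0 \<longrightarrow> (\<exists>i. x = g ^ i)))"

lemma prim_ne_zero: "prim \<noteq> 0" and prim_generates: "x \<noteq> 0 \<Longrightarrow> \<exists>i. x = prim ^ i"
  using someI_ex[OF field_has_generator[where 'a='a]] unfolding prim_def by blast+

lemma prim_power_eq_1_iff: "prim ^ i = 1 \<longleftrightarrow> units_order dvd i"
proof
  assume "units_order dvd i"
  thus "prim ^ i = 1" using power_units_order[OF prim_ne_zero] by (auto simp: power_mult)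
next
  assume prim_i: "prim ^ i = 1"
  define r where "r = i mod units_order"
  have prim_r: "prim ^ r = 1"
  proof -
    have "prim ^ i = (prim ^ units_order) ^ (i div units_order) * prim ^ r"
      unfolding r_def by (metis div_mult_mod_eq power_add power_mult mult.commute)
    thus ?thesis using prim_i power_units_order[OF prim_ne_zero] by simp
  qed
  show "units_order dvd i"
  proof (rule ccontr)
    assume "\<not> units_order dvd i"
    hence r: "r > 0" "r < units_order"
      using units_order_pos by (auto simp: r_def dvd_eq_mod_eq_0 gr0I)
    have "{x::'a. x \<noteq> 0} \<subseteq> (\<lambda>j. prim ^ j) ` {..<r}"
    proof
      fix x :: 'a assume "x \<in> {x. x \<noteq> 0}"
      then obtain j where j: "x = prim ^ j" using prim_generates by auto
      have "prim ^ j = (prim ^ r) ^ (j div r) * prim ^ (j mod r)"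
        by (metis div_mult_mod_eq power_add power_mult mult.commute)
      hence "x = prim ^ (j mod r)" using prim_r j by simp
      thus "x \<in> (\<lambda>j. prim ^ j) ` {..<r}" using r by auto
    qed
    hence "card {x::'a. x \<noteq> 0} \<le> card ((\<lambda>j. prim ^ j) ` {..<r})" by (intro card_mono) auto
    also have "\<dots> \<le> r" using card_image_le[of "{..<r}"] by simp
    finally show False using card_nonzero r by simp
  qed
qed

lemma prim_powers_eq: "(\<lambda>j. prim ^ j) ` {..<units_order} = {x. x \<noteq> 0}"
proof -
  have "(\<lambda>j. prim ^ j) ` {..<units_order} \<subseteq> {x. x \<noteq> 0}" using prim_ne_zero by auto
  moreover have "card ((\<lambda>j. prim ^ j) ` {..<units_order}) = units_order"
    using inj_on_cyclic_powers[of prim units_order] prim_power_eq_1_iff units_order_pos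
    by (simp add: card_image)
  ultimately show ?thesis using card_nonzero card_subset_eq[of "{x::'a. x \<noteq> 0}"] by simp
qed

lemma card_roots:
  assumes "c \<noteq> 0"
  shows "card {x::'a. x \<noteq> 0 \<and> x ^ e = c} =
    (if c ^ (units_order div gcd e units_order) = 1 then gcd e units_order else 0)"
proof -
  have "{x::'a. x \<noteq> 0 \<and> x ^ e = c} = {x \<in> (\<lambda>j. prim ^ j) ` {..<units_order}. x ^ e = c}"
    using prim_powers_eq by auto
  thus ?thesis
    using card_cyclic_roots[of prim units_order c e] prim_power_eq_1_iff units_order_pos
      prim_powers_eq assms
    by simp
qed

definition Fq2 :: "'a set" where "Fq2 = {x. x ^ (q ^ 2) = x}"
definition Fq :: "'a set" where "Fq = {x. x ^ q = x}"
definition T :: "'a \<Rightarrow> 'a" where "T x = x + x ^ q"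

lemma q_power_minus_one_dvd: "q ^ j - 1 dvd units_order" if "j dvd 2 * n"
proof -
  have "gcd (q ^ j - 1) (q ^ (2 * n) - 1) = q ^ gcd j (2 * n) - 1"
    using q_ge_2 by (intro gcd_power_diff_one) auto
  also have "gcd j (2 * n) = j" using that by (simp add: gcd_nat.absorb1)
  finally show ?thesis unfolding units_order_def by (metis gcd_dvd2)
qed

lemma card_frob_fixed:
  assumes "j dvd 2 * n"
  shows "card {x::'a. x ^ (q ^ j) = x} = q ^ j"
proof -
  have qj: "q ^ j \<ge> 1" using q_ge_2 by simp
  have "{x::'a. x ^ (q ^ j) = x} = insert 0 {x. x \<noteq> 0 \<and> x ^ (q ^ j - 1) = 1}"
    using q_power_pos power_eq_self_iff[OF _ qj] by auto
  moreover have "card {x::'a. x \<noteq> 0 \<and> x ^ (q ^ j - 1) = 1} = q ^ j - 1"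
    using card_roots[of 1 "q ^ j - 1"] q_power_minus_one_dvd[OF assms]
    by (simp add: gcd_nat.absorb1)
  ultimately show ?thesis using qj by simp
qed

lemma card_Fq2: "card Fq2 = q ^ 2"
  unfolding Fq2_def by (rule card_frob_fixed) simp

lemma card_Fq: "card Fq = q"
  unfolding Fq_def using card_frob_fixed[of 1] by simp

lemma Fq2_mult: "x \<in> Fq2 \<Longrightarrow> y \<in> Fq2 \<Longrightarrow> x * y \<in> Fq2"
  by (simp add: Fq2_def power_mult_distrib)
lemma Fq2_add: "x \<in> Fq2 \<Longrightarrow> y \<in> Fq2 \<Longrightarrow> x + y \<in> Fq2"
  using frob_add[of x y 2] by (simp add: Fq2_def)
lemma Fq2_neg: "x \<in> Fq2 \<Longrightarrow> - x \<in> Fq2"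
  using frob_neg[of x 2] by (simp add: Fq2_def)
lemma Fq2_0: "0 \<in> Fq2" using frob_zero[of 2] by (simp add: Fq2_def)
lemma Fq2_1: "1 \<in> Fq2" by (simp add: Fq2_def)
lemma Fq2_inverse: "x \<in> Fq2 \<Longrightarrow> inverse x \<in> Fq2"
  by (simp add: Fq2_def power_inverse)
lemma Fq2_divide: "x \<in> Fq2 \<Longrightarrow> y \<in> Fq2 \<Longrightarrow> x / y \<in> Fq2"
  by (simp add: Fq2_def power_divide)
lemma Fq2_power: "x \<in> Fq2 \<Longrightarrow> x ^ j \<in> Fq2"
  by (simp add: Fq2_def power_mult_distrib flip: power_mult) (metis mult.commute power_mult)

lemma Fq_mult: "x \<in> Fq \<Longrightarrow> y \<in> Fq \<Longrightarrow> x * y \<in> Fq"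
  by (simp add: Fq_def power_mult_distrib)
lemma Fq_neg: "x \<in> Fq \<Longrightarrow> - x \<in> Fq"
  using frob1_neg[of x] by (simp add: Fq_def)
lemma Fq_0: "0 \<in> Fq" using q_ge_2 by (simp add: Fq_def)
lemma Fq_divide: "x \<in> Fq \<Longrightarrow> y \<in> Fq \<Longrightarrow> x / y \<in> Fq"
  by (simp add: Fq_def power_divide)

lemma Fq2_frob_even: "x \<in> Fq2 \<Longrightarrow> x ^ (q ^ (2 * j)) = x"
proof (induction j)
  case (Suc j)
  have "x ^ (q ^ (2 * Suc j)) = (x ^ (q ^ 2)) ^ (q ^ (2 * j))"
    by (simp flip: power_mult power_add)
  thus ?case using Suc by (simp add: Fq2_def)
qed simp

lemma Fq2_frob_odd: "x \<in> Fq2 \<Longrightarrow> x ^ (q ^ (2 * j + 1)) = x ^ q"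
proof -
  assume "x \<in> Fq2"
  have "x ^ (q ^ (2 * j + 1)) = (x ^ (q ^ (2 * j))) ^ q" by (simp add: mult.commute flip: power_mult)
  thus ?thesis using Fq2_frob_even[OF \<open>x \<in> Fq2\<close>] by simp
qed

lemma Fq2_frob_frob: "x \<in> Fq2 \<Longrightarrow> (x ^ q) ^ q = x"
  by (simp add: Fq2_def power2_eq_square flip: power_mult)

lemma q_sq_minus_one: "q ^ 2 - 1 = (q - 1) * (q + 1)"
  by (simp add: power2_eq_square algebra_simps)

lemma norm_in_Fq: "x \<in> Fq2 \<Longrightarrow> x ^ (q + 1) \<in> Fq"
proof -
  assume x: "x \<in> Fq2"
  have "(x ^ (q + 1)) ^ q = (x ^ q) ^ q * x ^ q" by (simp add: power_mult_distrib power_add)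
  thus ?thesis using Fq2_frob_frob[OF x] by (simp add: Fq_def mult.commute)
qed

lemma norm_surj:
  assumes t: "t \<in> Fq" "t \<noteq> 0"
  obtains y where "y \<in> Fq2" "y \<noteq> 0" "y ^ (q + 1) = t"
proof -
  obtain M' where "units_order = (q ^ 2 - 1) * M'"
    using q_power_minus_one_dvd[of 2] by (auto elim: dvdE)
  hence M': "units_order = (q + 1) * ((q - 1) * M')" unfolding q_sq_minus_one by (simp add: ac_simps)
  hence gcd_q1: "gcd (q + 1) units_order = q + 1" by (metis dvd_triv_left gcd_nat.absorb1)
  have t_q1: "t ^ (q - 1) = 1" using t power_eq_self_iff[of t q] q_ge_2 by (simp add: Fq_def)
  have "units_order div (q + 1) = (q - 1) * M'"
    unfolding M' by (rule nonzero_mult_div_cancel_left) simp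
  hence "t ^ (units_order div gcd (q + 1) units_order) = 1"
    using gcd_q1 t_q1 by (simp add: power_mult)
  hence "card {x::'a. x \<noteq> 0 \<and> x ^ (q + 1) = t} = q + 1"
    using card_roots[OF t(2), of "q + 1"] gcd_q1 by simp
  hence "{x::'a. x \<noteq> 0 \<and> x ^ (q + 1) = t} \<noteq> {}" by (metis card.empty add_is_0 one_neq_zero)
  then obtain y where y: "y \<noteq> 0" "y ^ (q + 1) = t" by auto
  have "y ^ (q ^ 2 - 1) = (y ^ (q + 1)) ^ (q - 1)"
    unfolding q_sq_minus_one by (metis power_mult mult.commute)
  hence "y ^ (q ^ 2) = y"
    using y t_q1 power_eq_self_iff[of y "q ^ 2"] q_power_pos[of 2] by simp
  thus ?thesis using y that by (simp add: Fq2_def)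
qed

lemma T_in_Fq: "x \<in> Fq2 \<Longrightarrow> T x \<in> Fq"
  by (simp add: Fq_def T_def frob1_add Fq2_frob_frob add.commute)

lemma T_add: "T (x + y) = T x + T y"
  by (simp add: T_def frob1_add)

lemma T_zero: "T 0 = 0" using q_ge_2 by (simp add: T_def)

lemma card_T_fibre_le: "card {x\<in>Fq2. T x = t} \<le> q"
proof -
  have "{x\<in>Fq2. T x = t} \<subseteq> {x::'a. (\<Sum>i\<in>{1,q}. x ^ i) = t}"
    using q_ge_2 by (auto simp: T_def)
  hence "card {x\<in>Fq2. T x = t} \<le> card {x::'a. (\<Sum>i\<in>{1,q}. x ^ i) = t}"
    by (intro card_mono) auto
  also have "\<dots> \<le> Max {1, q}" using q_ge_2 by (intro card_roots_sum_powers_le) auto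
  finally show ?thesis using q_ge_2 by simp
qed

lemma card_T_fibre: "t \<in> Fq \<Longrightarrow> card {x\<in>Fq2. T x = t} = q"
proof -
  assume t: "t \<in> Fq"
  have "card Fq2 = (\<Sum>b\<in>Fq. card {a\<in>Fq2. T a = b})"
    using T_in_Fq by (intro card_eq_sum_card_fibres) auto
  hence "(\<Sum>b\<in>Fq. card {a\<in>Fq2. T a = b}) = card Fq * q"
    using card_Fq2 card_Fq by (simp add: power2_eq_square)
  thus ?thesis
    using bound_attained_if_sum_eq[of Fq "\<lambda>b. card {a\<in>Fq2. T a = b}" q t] card_T_fibre_le t
    by simp
qed

lemma card_T_kernel_scaled:
  assumes "y \<in> Fq2" "y \<noteq> 0"
  shows "card {l\<in>Fq2. l \<noteq> 0 \<and> T (l * y) = 0} = q - 1"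
proof -
  have "(\<lambda>l. l * y) ` {l\<in>Fq2. T (l * y) = 0} = {x\<in>Fq2. T x = 0}"
  proof (intro equalityI subsetI)
    fix x assume "x \<in> {x\<in>Fq2. T x = 0}"
    thus "x \<in> (\<lambda>l. l * y) ` {l\<in>Fq2. T (l * y) = 0}"
      using assms by (intro image_eqI[of _ _ "x / y"]) (auto intro: Fq2_divide)
  qed (use assms Fq2_mult in auto)
  moreover have "inj_on (\<lambda>l. l * y) {l\<in>Fq2. T (l * y) = 0}"
    using assms by (auto simp: inj_on_def)
  ultimately have "card {l\<in>Fq2. T (l * y) = 0} = q"
    using card_T_fibre[OF Fq_0] card_image[of "\<lambda>l. l * y" "{l\<in>Fq2. T (l * y) = 0}"] by simp
  moreover have "{l\<in>Fq2. l \<noteq> 0 \<and> T (l * y) = 0} = {l\<in>Fq2. T (l * y) = 0} - {0}" by auto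
  ultimately show ?thesis using Fq2_0 T_zero by (simp add: card_Diff_singleton)
qed

lemma T_nondegenerate:
  assumes "b \<in> Fq2" "\<And>x. x \<in> Fq2 \<Longrightarrow> T (x * b) = 0"
  shows "b = 0"
proof (rule ccontr)
  assume b: "b \<noteq> 0"
  have "{l\<in>Fq2. l \<noteq> 0 \<and> T (l * b) = 0} = Fq2 - {0}" using assms by auto
  hence "q - 1 = q ^ 2 - 1" using card_T_kernel_scaled[OF assms(1) b] card_Fq2 Fq2_0
    by (simp add: card_Diff_singleton)
  moreover have "q < q ^ 2" using q_ge_2 by (simp add: power2_eq_square)
  ultimately show False using q_ge_2 by linarith
qed

abbreviation TR :: "'a \<Rightarrow> 'a" where "TR \<equiv> Tr q n"

lemma Tr_add: "TR (x + y) = TR x + TR y"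
  by (simp add: Tr_def frob_add sum.distrib)

lemma Tr_zero: "TR 0 = 0"
  by (simp add: Tr_def frob_zero)

lemma Tr_frob: "TR x ^ (q ^ j) = TR (x ^ (q ^ j))"
proof -
  have "TR x ^ (q ^ j) = (\<Sum>i<n. (x ^ (q ^ (2 * i))) ^ (q ^ j))" by (simp add: Tr_def frob_sum)
  also have "\<dots> = TR (x ^ (q ^ j))" unfolding Tr_def
    by (intro sum.cong refl) (metis power_mult mult.commute)
  finally show ?thesis .
qed

lemma Tr_in_Fq2: "TR x \<in> Fq2"
proof -
  let ?f = "\<lambda>i. x ^ (q ^ (2 * i))"
  have "TR x ^ (q ^ 2) = (\<Sum>i<n. ?f (Suc i))"
    unfolding Tr_def frob_sum
    by (intro sum.cong refl) (simp add: mult.commute flip: power_mult power_add)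
  also have "\<dots> = (\<Sum>i<n. ?f i)"
    using sum.lessThan_Suc_shift[of ?f n] sum.lessThan_Suc[of ?f n] frob_2n[of x]
    by (simp add: add.commute)
  finally show ?thesis by (simp add: Fq2_def Tr_def)
qed

lemma Tr_Fq2_linear: "l \<in> Fq2 \<Longrightarrow> TR (l * x) = l * TR x"
  by (simp add: Tr_def power_mult_distrib Fq2_frob_even sum_distrib_left)

lemma Tr_frob_even: "TR (x ^ (q ^ (2 * j))) = TR x"
  using Tr_frob[of x "2 * j"] Fq2_frob_even[OF Tr_in_Fq2] by simp

lemma Tr_nonzero: "\<exists>x. TR x \<noteq> 0"
proof (rule ccontr)
  assume "\<not> (\<exists>x. TR x \<noteq> 0)"
  define A where "A = (\<lambda>i. q ^ (2 * i)) ` {..<n}"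
  have "inj_on (\<lambda>i. q ^ (2 * i)) {..<n}"
    using q_ge_2 by (auto simp: inj_on_def power_inject_exp)
  hence "TR x = (\<Sum>j\<in>A. x ^ j)" for x
    unfolding Tr_def A_def by (simp add: sum.reindex)
  hence "card (UNIV :: 'a set) = card {x::'a. (\<Sum>j\<in>A. x ^ j) = 0}"
    using \<open>\<not> (\<exists>x. TR x \<noteq> 0)\<close> by simp
  moreover have "Max A = q ^ (2 * (n - 1))"
  proof (rule Max_eqI)
    fix y assume "y \<in> A"
    thus "y \<le> q ^ (2 * (n - 1))" using q_ge_2 by (auto simp: A_def intro!: power_increasing)
  qed (use n_pos in \<open>auto simp: A_def\<close>)
  moreover have "card {x::'a. (\<Sum>j\<in>A. x ^ j) = 0} \<le> Max A"
    using n_pos \<open>Max A = q ^ (2 * (n - 1))\<close> q_ge_2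
    by (intro card_roots_sum_powers_le) (auto simp: A_def)
  moreover have "q ^ (2 * (n - 1)) < q ^ (2 * n)"
    using q_ge_2 n_pos by (intro power_strict_increasing) auto
  ultimately show False using card_field by simp
qed

lemma Tr_nondegenerate: "(\<And>v. TR (w * v) = 0) \<Longrightarrow> w = 0"
proof (rule ccontr)
  assume h: "\<And>v. TR (w * v) = 0" and w: "w \<noteq> 0"
  obtain x where "TR x \<noteq> 0" using Tr_nonzero by blast
  moreover have "w * (x / w) = x" using w by simp
  ultimately show False using h[of "x / w"] by simp
qed

end

context field_q2n begin

definition Fq2_subspace :: "'a set \<Rightarrow> bool" where
  "Fq2_subspace W \<longleftrightarrow> 0 \<in> W \<and> (\<forall>u\<in>W. \<forall>v\<in>W. u + v \<in> W) \<and> (\<forall>x\<in>Fq2. \<forall>u\<in>W. x * u \<in> W)"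

definition hermitian :: "('a \<Rightarrow> 'a \<Rightarrow> 'a) \<Rightarrow> 'a set \<Rightarrow> bool" where
  "hermitian B W \<longleftrightarrow> (\<forall>u\<in>W. \<forall>v\<in>W. B v u = (B u v) ^ q) \<and>
     (\<forall>u\<in>W. \<forall>v\<in>W. \<forall>w\<in>W. B u (v + w) = B u v + B u w) \<and>
     (\<forall>x\<in>Fq2. \<forall>u\<in>W. \<forall>v\<in>W. B u (x * v) = x * B u v)"

definition radical :: "('a \<Rightarrow> 'a \<Rightarrow> 'a) \<Rightarrow> 'a set \<Rightarrow> 'a set" where
  "radical B W = {w\<in>W. \<forall>v\<in>W. B w v = 0}"

definition level :: "('a \<Rightarrow> 'a \<Rightarrow> 'a) \<Rightarrow> 'a set \<Rightarrow> 'a \<Rightarrow> 'a set" where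
  "level B W t = {w\<in>W. B w w = t}"

definition perp :: "('a \<Rightarrow> 'a \<Rightarrow> 'a) \<Rightarrow> 'a set \<Rightarrow> 'a \<Rightarrow> 'a set" where
  "perp B W v = {w\<in>W. B v w = 0}"

lemma Fq2_subspace_add: "Fq2_subspace W \<Longrightarrow> u \<in> W \<Longrightarrow> v \<in> W \<Longrightarrow> u + v \<in> W"
  unfolding Fq2_subspace_def by blast

lemma Fq2_subspace_scale: "Fq2_subspace W \<Longrightarrow> x \<in> Fq2 \<Longrightarrow> u \<in> W \<Longrightarrow> x * u \<in> W"
  unfolding Fq2_subspace_def by blast

lemma Fq2_subspace_diff: "Fq2_subspace W \<Longrightarrow> u \<in> W \<Longrightarrow> v \<in> W \<Longrightarrow> u - v \<in> W"
  using Fq2_subspace_add[of W u "(- 1) * v"] Fq2_subspace_scale[of W "- 1" v] Fq2_neg[OF Fq2_1]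
  by simp

lemma hermitian_subset: "hermitian B W \<Longrightarrow> W' \<subseteq> W \<Longrightarrow> hermitian B W'"
  unfolding hermitian_def by blast

context
  fixes B W assumes H: "hermitian B W" and S: "Fq2_subspace W"
begin

lemma herm_conj: "u \<in> W \<Longrightarrow> v \<in> W \<Longrightarrow> B v u = (B u v) ^ q"
  using H unfolding hermitian_def by blast

lemma herm_add_right: "u \<in> W \<Longrightarrow> v \<in> W \<Longrightarrow> w \<in> W \<Longrightarrow> B u (v + w) = B u v + B u w"
  using H unfolding hermitian_def by blast

lemma herm_scale_right: "x \<in> Fq2 \<Longrightarrow> u \<in> W \<Longrightarrow> v \<in> W \<Longrightarrow> B u (x * v) = x * B u v"
  using H unfolding hermitian_def by blast

lemma herm_in_Fq2: "u \<in> W \<Longrightarrow> v \<in> W \<Longrightarrow> B u v \<in> Fq2"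
  using herm_conj[of u v] herm_conj[of v u] by (simp add: Fq2_def power2_eq_square power_mult)

lemma herm_diag_in_Fq: "u \<in> W \<Longrightarrow> B u u \<in> Fq"
  using herm_conj[of u u] by (simp add: Fq_def)

lemma herm_orth_sym: "u \<in> W \<Longrightarrow> v \<in> W \<Longrightarrow> B u v = 0 \<Longrightarrow> B v u = 0"
  using herm_conj[of u v] frob_zero[of 1] by simp

lemma herm_add_left: "u \<in> W \<Longrightarrow> v \<in> W \<Longrightarrow> w \<in> W \<Longrightarrow> B (u + v) w = B u w + B v w"
  using herm_conj[of w "u + v"] herm_add_right[of w u v] herm_conj[of w u] herm_conj[of w v]
    Fq2_subspace_add[OF S, of u v] frob1_add
  by simp

lemma herm_scale_left: "x \<in> Fq2 \<Longrightarrow> u \<in> W \<Longrightarrow> v \<in> W \<Longrightarrow> B (x * u) v = x ^ q * B u v"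
  using herm_conj[of v "x * u"] herm_scale_right[of x v u] herm_conj[of v u]
    Fq2_subspace_scale[OF S, of x u]
  by (simp add: power_mult_distrib)

lemma herm_scale_diag: "y \<in> Fq2 \<Longrightarrow> u \<in> W \<Longrightarrow> B (y * u) (y * u) = y ^ (q + 1) * B u u"
  using herm_scale_left[of y u "y * u"] herm_scale_right[of y u u] Fq2_subspace_scale[OF S, of y u]
  by (simp add: algebra_simps)

lemma herm_zero_right: "u \<in> W \<Longrightarrow> B u 0 = 0"
  using herm_scale_right[of 0 u u] Fq2_0 by simp

lemma herm_diff_right: "u \<in> W \<Longrightarrow> v \<in> W \<Longrightarrow> w \<in> W \<Longrightarrow> B u (v - w) = B u v - B u w"
  using herm_add_right[of u v "(- 1) * w"] herm_scale_right[of "- 1" u w]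
    Fq2_subspace_scale[OF S, of "- 1" w] Fq2_neg[OF Fq2_1]
  by simp

lemma card_level_eq:
  assumes t: "t \<in> Fq" "t \<noteq> 0" and t': "t' \<in> Fq" "t' \<noteq> 0"
  shows "card (level B W t) = card (level B W t')"
proof -
  obtain y where y: "y \<in> Fq2" "y \<noteq> 0" "y ^ (q + 1) = t' / t"
    using norm_surj[of "t' / t"] t t' Fq_divide by auto
  have "(\<lambda>w. y * w) ` level B W t = level B W t'"
  proof (intro equalityI subsetI)
    fix z assume "z \<in> (\<lambda>w. y * w) ` level B W t"
    then obtain w where "w \<in> W" "B w w = t" "z = y * w" by (auto simp: level_def)
    thus "z \<in> level B W t'"
      using herm_scale_diag[OF y(1)] Fq2_subspace_scale[OF S y(1)] y t by (simp add: level_def)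
  next
    fix z assume "z \<in> level B W t'"
    hence z: "z \<in> W" "B z z = t'" by (auto simp: level_def)
    have iy: "inverse y \<in> Fq2" using y Fq2_inverse by blast
    have "B (inverse y * z) (inverse y * z) = inverse (y ^ (q + 1)) * t'"
      using herm_scale_diag[OF iy z(1)] z by (simp add: power_inverse)
    also have "\<dots> = t" using y t t' by simp
    finally have "inverse y * z \<in> level B W t"
      using Fq2_subspace_scale[OF S iy z(1)] by (simp add: level_def)
    moreover have "z = y * (inverse y * z)" using y by simp
    ultimately show "z \<in> (\<lambda>w. y * w) ` level B W t" by blast
  qed
  moreover have "inj_on (\<lambda>w. y * w) (level B W t)" using y by (auto simp: inj_on_def)
  ultimately show ?thesis using card_image[of "\<lambda>w. y * w" "level B W t"] by simp
qed

lemma card_level_sum: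
  assumes t: "t \<in> Fq" "t \<noteq> 0"
  shows "card W = card (level B W 0) + (q - 1) * card (level B W t)"
proof -
  have "card W = (\<Sum>s\<in>Fq. card (level B W s))"
    using herm_diag_in_Fq card_eq_sum_card_fibres[of W Fq "\<lambda>w. B w w"]
    by (auto simp: level_def)
  also have "\<dots> = card (level B W 0) + (\<Sum>s\<in>Fq - {0}. card (level B W s))"
    using Fq_0 by (simp add: sum.remove)
  also have "(\<Sum>s\<in>Fq - {0}. card (level B W s)) = (\<Sum>s\<in>Fq - {0}. card (level B W t))"
    using card_level_eq[OF _ _ t] by (intro sum.cong refl) auto
  also have "\<dots> = (q - 1) * card (level B W t)"
    using card_Fq Fq_0 by (simp add: card_Diff_singleton)
  finally show ?thesis .
qed

lemma radical_eq_if_totally_isotropic: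
  assumes isotropic: "\<And>w. w \<in> W \<Longrightarrow> B w w = 0"
  shows "radical B W = W"
proof -
  \<comment> \<open>polarisation: B(u + x w, u + x w) = T(x B(u, w)), and T is nondegenerate\<close>
  have "B u w = 0" if uw: "u \<in> W" "w \<in> W" for u w
  proof -
    have "T (x * B u w) = 0" if x: "x \<in> Fq2" for x
    proof -
      have xw: "x * w \<in> W" using Fq2_subspace_scale[OF S x uw(2)] .
      have "B (u + x * w) (u + x * w) = B u u + x * B u w + (x ^ q * (B u w) ^ q + x ^ (q + 1) * B w w)"
        using herm_add_left[OF uw(1) xw] herm_add_right[OF uw(1) uw(1) xw]
          herm_add_right[OF xw uw(1) xw] herm_scale_right[OF x uw] herm_scale_left[OF x uw(2,1)]
          herm_conj[OF uw] herm_scale_diag[OF x uw(2)] Fq2_subspace_add[OF S uw(1) xw]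
        by simp
      thus ?thesis
        using isotropic uw Fq2_subspace_add[OF S uw(1) xw] by (simp add: T_def power_mult_distrib)
    qed
    thus ?thesis using T_nondegenerate herm_in_Fq2[OF uw] by (metis mult.commute)
  qed
  thus ?thesis by (auto simp: radical_def)
qed

context
  fixes v assumes v: "v \<in> W" and anisotropic: "B v v \<noteq> 0"
begin

lemma Fq2_subspace_perp: "Fq2_subspace (perp B W v)"
  using S herm_zero_right[OF v] herm_add_right[OF v] herm_scale_right[OF _ v]
  unfolding Fq2_subspace_def perp_def by auto

lemma perp_component:
  assumes u: "u \<in> W"
  shows "B v u / B v v \<in> Fq2" "u - (B v u / B v v) * v \<in> perp B W v"
proof -
  show x: "B v u / B v v \<in> Fq2" using herm_in_Fq2[OF v u] herm_in_Fq2[OF v v] Fq2_divide by simp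
  have "B v (u - (B v u / B v v) * v) = B v u - (B v u / B v v) * B v v"
    using herm_diff_right[OF v u] herm_scale_right[OF x v v] Fq2_subspace_scale[OF S x v] by simp
  thus "u - (B v u / B v v) * v \<in> perp B W v"
    using anisotropic Fq2_subspace_diff[OF S u Fq2_subspace_scale[OF S x v]]
    by (simp add: perp_def)
qed

lemma radical_perp: "radical B (perp B W v) = radical B W"
proof (intro equalityI subsetI)
  fix w assume "w \<in> radical B (perp B W v)"
  hence w: "w \<in> W" "B v w = 0" "\<And>z. z \<in> perp B W v \<Longrightarrow> B w z = 0"
    by (auto simp: radical_def perp_def)
  have "B w u = 0" if u: "u \<in> W" for u
  proof -
    define x where "x = B v u / B v v"
    have x: "x \<in> Fq2" "u - x * v \<in> perp B W v" using perp_component[OF u] by (simp_all add: x_def)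
    have "B w (x * v) = 0" using herm_scale_right[OF x(1) w(1) v] herm_orth_sym[OF v w(1,2)] by simp
    thus "B w u = 0"
      using w(3)[OF x(2)] herm_diff_right[OF w(1) u Fq2_subspace_scale[OF S x(1) v]] by simp
  qed
  thus "w \<in> radical B W" using w by (simp add: radical_def)
next
  fix w assume w: "w \<in> radical B W"
  hence "B v w = 0" using herm_orth_sym[OF _ v] v by (simp add: radical_def)
  thus "w \<in> radical B (perp B W v)" using w by (auto simp: radical_def perp_def)
qed

lemma bij_betw_perp_sum: "bij_betw (\<lambda>(x, w). x * v + w) (Fq2 \<times> perp B W v) W"
proof (rule bij_betw_imageI)
  show "inj_on (\<lambda>(x, w). x * v + w) (Fq2 \<times> perp B W v)"
  proof (rule inj_onI, clarify)
    fix x w x' w' assume xw: "x \<in> Fq2" "w \<in> perp B W v" "x' \<in> Fq2" "w' \<in> perp B W v"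
      and eq: "x * v + w = x' * v + w'"
    have Bv_sum: "B v (y * v + z) = y * B v v" if "y \<in> Fq2" "z \<in> perp B W v" for y z
      using that herm_add_right[OF v Fq2_subspace_scale[OF S _ v]] herm_scale_right[OF _ v v]
      by (simp add: perp_def)
    have "x * B v v = B v (x * v + w)" using Bv_sum[OF xw(1,2)] by simp
    also have "\<dots> = x' * B v v" using Bv_sum[OF xw(3,4)] eq by simp
    finally have "x = x'" using anisotropic by simp
    thus "x = x' \<and> w = w'" using eq by simp
  qed
  show "(\<lambda>(x, w). x * v + w) ` (Fq2 \<times> perp B W v) = W"
  proof (intro equalityI subsetI)
    fix z assume "z \<in> (\<lambda>(x, w). x * v + w) ` (Fq2 \<times> perp B W v)"
    thus "z \<in> W"
      using Fq2_subspace_add[OF S Fq2_subspace_scale[OF S _ v]] by (auto simp: perp_def)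
  next
    fix u assume u: "u \<in> W"
    have "u = (\<lambda>(x, w). x * v + w) (B v u / B v v, u - (B v u / B v v) * v)" by simp
    thus "u \<in> (\<lambda>(x, w). x * v + w) ` (Fq2 \<times> perp B W v)"
      using perp_component[OF u] by blast
  qed
qed

lemma herm_diag_perp_sum:
  assumes x: "x \<in> Fq2" and w: "w \<in> perp B W v"
  shows "B (x * v + w) (x * v + w) = x ^ (q + 1) * B v v + B w w"
proof -
  have w': "w \<in> W" "B v w = 0" using w by (auto simp: perp_def)
  have xv: "x * v \<in> W" using Fq2_subspace_scale[OF S x v] .
  have "B (x * v + w) (x * v + w) = B (x * v) (x * v) + B (x * v) w + (B w (x * v) + B w w)"
    using herm_add_left[OF xv w'(1)] herm_add_right[OF xv xv w'(1)]
      herm_add_right[OF w'(1) xv w'(1)] Fq2_subspace_add[OF S xv w'(1)]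
    by simp
  moreover have "B (x * v) w = 0" using herm_scale_left[OF x v w'(1)] w' by simp
  moreover have "B w (x * v) = 0"
    using herm_scale_right[OF x w'(1) v] herm_orth_sym[OF v w'(1) w'(2)] by simp
  ultimately show ?thesis using herm_scale_diag[OF x v] by simp
qed

lemma level_zero_eq_image:
  "level B W 0 = (\<lambda>(x, w). x * v + w) ` (SIGMA x:Fq2. level B (perp B W v) (- (x ^ (q + 1) * B v v)))"
  (is "_ = ?f ` ?S")
proof (intro equalityI subsetI)
  fix u assume "u \<in> level B W 0"
  hence u: "u \<in> W" "B u u = 0" by (auto simp: level_def)
  then obtain x w where xw: "x \<in> Fq2" "w \<in> perp B W v" "u = x * v + w"
    using bij_betw_imp_surj_on[OF bij_betw_perp_sum] by force
  hence "B w w = - (x ^ (q + 1) * B v v)"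
    using herm_diag_perp_sum[OF xw(1,2)] u by (simp add: add_eq_0_iff)
  thus "u \<in> ?f ` ?S" using xw by (auto simp: level_def)
next
  fix u assume "u \<in> ?f ` ?S"
  then obtain x w where xw: "x \<in> Fq2" "w \<in> perp B W v" "B w w = - (x ^ (q + 1) * B v v)"
    "u = x * v + w"
    by (auto simp: level_def)
  moreover have "u \<in> W" using xw bij_betw_imp_surj_on[OF bij_betw_perp_sum] by force
  ultimately show "u \<in> level B W 0" using herm_diag_perp_sum[OF xw(1,2)] by (simp add: level_def)
qed

lemma card_perp: "card W = q ^ 2 * card (perp B W v)"
  using bij_betw_same_card[OF bij_betw_perp_sum] card_Fq2 by (simp add: card_cartesian_product)

end

end

lemma card_level_perp:
  assumes H: "hermitian B W" and S: "Fq2_subspace W" and v: "v \<in> W"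
    and anisotropic: "B v v \<noteq> 0"
  shows "card (level B W 0) =
     card (level B (perp B W v) 0) + (q ^ 2 - 1) * card (level B (perp B W v) (- B v v))"
proof -
  let ?V = "perp B W v" and ?h = "B v v"
  let ?S = "SIGMA x:Fq2. level B ?V (- (x ^ (q + 1) * ?h))"
  have "inj_on (\<lambda>(x, w). x * v + w) ?S"
    using bij_betw_perp_sum[OF H S v anisotropic]
    by (rule inj_on_subset[OF bij_betw_imp_inj_on]) (auto simp: level_def)
  hence "card (level B W 0) = (\<Sum>x\<in>Fq2. card (level B ?V (- (x ^ (q + 1) * ?h))))"
    unfolding level_zero_eq_image[OF H S v anisotropic] by (simp add: card_image card_SigmaI)
  also have "\<dots> = card (level B ?V 0) + (\<Sum>x\<in>Fq2 - {0}. card (level B ?V (- (x ^ (q + 1) * ?h))))"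
    using Fq2_0 by (simp add: sum.remove)
  also have "(\<Sum>x\<in>Fq2 - {0}. card (level B ?V (- (x ^ (q + 1) * ?h)))) =
      (\<Sum>x\<in>Fq2 - {0}. card (level B ?V (- ?h)))"
  proof (intro sum.cong refl)
    fix x assume x: "x \<in> Fq2 - {0}"
    have "- (x ^ (q + 1) * ?h) \<in> Fq" "- ?h \<in> Fq"
      using norm_in_Fq[of x] x herm_diag_in_Fq[OF H S v] Fq_mult Fq_neg by auto
    moreover have "- (x ^ (q + 1) * ?h) \<noteq> 0" "- ?h \<noteq> 0" using x anisotropic by auto
    moreover have "hermitian B ?V" using hermitian_subset[OF H] by (auto simp: perp_def)
    ultimately show "card (level B ?V (- (x ^ (q + 1) * ?h))) = card (level B ?V (- ?h))"
      using card_level_eq Fq2_subspace_perp[OF H S v anisotropic] by blast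
  qed
  also have "\<dots> = (q ^ 2 - 1) * card (level B ?V (- ?h))"
    using card_Fq2 Fq2_0 by (simp add: card_Diff_singleton)
  finally show ?thesis .
qed


lemma isotropic_excess_perp:
  assumes H: "hermitian B W" and S: "Fq2_subspace W" and v: "v \<in> W"
    and anisotropic: "B v v \<noteq> 0"
  shows "int q * int (card (level B W 0)) - int (card W) =
    - int q * (int q * int (card (level B (perp B W v) 0)) - int (card (perp B W v)))"
proof -
  let ?V = "perp B W v"
  define E where "E = card (level B ?V (- B v v))"
  have "hermitian B ?V" using hermitian_subset[OF H] by (auto simp: perp_def)
  moreover have "- B v v \<in> Fq" "- B v v \<noteq> 0"
    using herm_diag_in_Fq[OF H S v] Fq_neg anisotropic by auto
  ultimately have V_sum: "int (card ?V) = int (card (level B ?V 0)) + (int q - 1) * int E"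
    using card_level_sum[OF _ Fq2_subspace_perp[OF H S v anisotropic]] q_ge_2
    by (simp add: E_def of_nat_diff)
  have W_level: "int (card (level B W 0)) = int (card (level B ?V 0)) + (int q ^ 2 - 1) * int E"
    using card_level_perp[OF H S v anisotropic] q_power_pos[of 2] by (simp add: E_def of_nat_diff)
  have W_card: "int (card W) = int q ^ 2 * int (card ?V)"
    using card_perp[OF H S v anisotropic] by simp
  show ?thesis unfolding W_level W_card V_sum by (simp add: algebra_simps power2_eq_square)
qed

lemma hermitian_isotropic_count:
  assumes "Fq2_subspace W" "hermitian B W"
  shows "\<exists>r. card W = card (radical B W) * q ^ (2 * r) \<and>
    int q * int (card (level B W 0)) =
      int (card W) + (-1) ^ r * (int q - 1) * int q ^ r * int (card (radical B W))"
  using assms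
proof (induction "card W" arbitrary: W rule: less_induct)
  case less
  note S = less.prems(1) and H = less.prems(2)
  show ?case
  proof (cases "\<exists>v\<in>W. B v v \<noteq> 0")
    case False
    hence "radical B W = W" "level B W 0 = W"
      using radical_eq_if_totally_isotropic[OF H S] by (auto simp: level_def)
    thus ?thesis by (intro exI[of _ 0]) (simp add: algebra_simps)
  next
    case True
    then obtain v where v: "v \<in> W" "B v v \<noteq> 0" by blast
    let ?V = "perp B W v"
    have S': "Fq2_subspace ?V" and H': "hermitian B ?V"
      using Fq2_subspace_perp[OF H S v] hermitian_subset[OF H] by (auto simp: perp_def)
    have "?V \<subset> W" using v by (auto simp: perp_def)
    hence "card ?V < card W" by (intro psubset_card_mono) auto
    then obtain r where "card ?V = card (radical B ?V) * q ^ (2 * r)"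
      "int q * int (card (level B ?V 0)) =
         int (card ?V) + (-1) ^ r * (int q - 1) * int q ^ r * int (card (radical B ?V))"
      using less.hyps[OF _ S' H'] by blast
    hence r: "card ?V = card (radical B W) * q ^ (2 * r)"
      "int q * int (card (level B ?V 0)) =
         int (card ?V) + (-1) ^ r * (int q - 1) * int q ^ r * int (card (radical B W))"
      using radical_perp[OF H S v] by simp_all
    show ?thesis
    proof (intro exI[of _ "Suc r"] conjI)
      show "card W = card (radical B W) * q ^ (2 * Suc r)"
        using card_perp[OF H S v] r(1) by (simp add: power_add power2_eq_square ac_simps)
      show "int q * int (card (level B W 0)) = int (card W) +
          (-1) ^ Suc r * (int q - 1) * int q ^ Suc r * int (card (radical B W))"
        using isotropic_excess_perp[OF H S v] r(2) by (simp add: algebra_simps)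
    qed
  qed
qed

end

locale trace_form = field_q2n q n p k TY for q n p k and TY :: "'a::{finite,field} itself" +
  fixes a :: 'a and m :: nat
  assumes a_ne_zero: "a \<noteq> 0" and m_le: "m \<le> n - 1"
begin

definition s :: nat where "s = 2 * m + 1"
definition H :: "'a \<Rightarrow> 'a \<Rightarrow> 'a" where "H u v = TR (a * u ^ (q ^ s) * v)"
definition Bform :: "'a \<Rightarrow> 'a \<Rightarrow> 'a \<Rightarrow> 'a" where "Bform l u v = l * H u v + (l * H v u) ^ q"
definition f :: "'a \<Rightarrow> 'a" where "f u = TR (u * Lmap q m a (u ^ q))"

lemma f_eq_H: "f u = H u u"
proof -
  have "(u ^ q) ^ (q ^ (2 * m)) = u ^ (q ^ s)" by (simp add: s_def flip: power_mult)
  thus ?thesis by (simp add: f_def H_def Lmap_def mult_ac)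
qed

lemma f_in_Fq2: "f u \<in> Fq2" by (simp add: f_def Tr_in_Fq2)

lemma H_in_Fq2: "H u v \<in> Fq2" by (simp add: H_def Tr_in_Fq2)

lemma H_add_left: "H (u + w) v = H u v + H w v"
  by (simp add: H_def frob_add distrib_left distrib_right Tr_add)

lemma H_add_right: "H u (v + w) = H u v + H u w"
  by (simp add: H_def distrib_left Tr_add)

lemma H_scale_right: "x \<in> Fq2 \<Longrightarrow> H u (x * v) = x * H u v"
  using Tr_Fq2_linear[of x "a * u ^ (q ^ s) * v"] by (simp add: H_def mult_ac)

lemma H_scale_left: "x \<in> Fq2 \<Longrightarrow> H (x * v) u = x ^ q * H v u"
proof -
  assume x: "x \<in> Fq2"
  have "x ^ (q ^ s) = x ^ q" using Fq2_frob_odd[OF x, of m] by (simp add: s_def)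
  hence "H (x * v) u = TR (x ^ q * (a * v ^ (q ^ s) * u))"
    by (simp add: H_def power_mult_distrib mult_ac)
  thus ?thesis using Tr_Fq2_linear[OF Fq2_power[OF x]] by (simp add: H_def)
qed

lemma Fq2_subspace_UNIV: "Fq2_subspace UNIV" by (simp add: Fq2_subspace_def)

lemma hermitian_Bform: "l \<in> Fq2 \<Longrightarrow> hermitian (Bform l) UNIV"
  unfolding hermitian_def
proof (intro conjI ballI)
  fix u v assume l: "l \<in> Fq2"
  have "(Bform l u v) ^ q = (l * H u v) ^ q + ((l * H v u) ^ q) ^ q" by (simp add: Bform_def frob1_add)
  also have "((l * H v u) ^ q) ^ q = l * H v u" using Fq2_frob_frob[OF Fq2_mult[OF l H_in_Fq2]] .
  finally show "Bform l v u = (Bform l u v) ^ q" by (simp add: Bform_def add.commute)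
next
  fix u v w
  show "Bform l u (v + w) = Bform l u v + Bform l u w"
    by (simp add: Bform_def H_add_left H_add_right distrib_left frob1_add)
next
  fix x u v assume l: "l \<in> Fq2" and x: "x \<in> Fq2"
  have "(l * H (x * v) u) ^ q = (l * (x ^ q * H v u)) ^ q" by (simp only: H_scale_left[OF x])
  also have "\<dots> = (x ^ q) ^ q * (l * H v u) ^ q" by (simp add: power_mult_distrib mult_ac)
  finally have conj_part: "(l * H (x * v) u) ^ q = x * (l * H v u) ^ q"
    using Fq2_frob_frob[OF x] by simp
  have "Bform l u (x * v) = l * (x * H u v) + (l * H (x * v) u) ^ q"
    by (simp only: Bform_def H_scale_right[OF x])
  also have "\<dots> = l * (x * H u v) + x * (l * H v u) ^ q" by (simp only: conj_part)
  finally show "Bform l u (x * v) = x * Bform l u v" by (simp add: Bform_def algebra_simps)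
qed

lemma Bform_diag: "Bform l u u = T (l * f u)"
  by (simp add: Bform_def T_def f_eq_H)

lemma s_less: "s < 2 * n" using m_le n_pos by (simp add: s_def)

lemma q_power_s_complement: "q ^ s * q ^ (2 * n - s) = q ^ (2 * n)"
  using s_less by (simp flip: power_add)

lemma Bform_eq_Tr:
  assumes l: "l \<in> Fq2"
  shows "Bform l u v = TR (((l * a) * u ^ (q ^ s) + ((l * a) * u) ^ (q ^ (2 * n - s))) * v)"
proof -
  define b where "b = l * a"
  have "l * H v u = TR (b * v ^ (q ^ s) * u)"
    using Tr_Fq2_linear[OF l, of "a * v ^ (q ^ s) * u"] by (simp add: H_def b_def mult_ac)
  hence "(l * H v u) ^ q = TR ((b * v ^ (q ^ s) * u) ^ q)" using Tr_frob[of _ 1] by simp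
  also have "\<dots> = TR (((b * v ^ (q ^ s) * u) ^ q) ^ (q ^ (2 * (n - m - 1))))"
    by (rule Tr_frob_even[symmetric])
  also have "((b * v ^ (q ^ s) * u) ^ q) ^ (q ^ (2 * (n - m - 1))) = (b * v ^ (q ^ s) * u) ^ (q ^ (2 * n - s))"
  proof -
    have "Suc (2 * (n - m - 1)) = 2 * n - s" using m_le n_pos by (simp add: s_def)
    hence "q * q ^ (2 * (n - m - 1)) = q ^ (2 * n - s)" by (metis power_Suc)
    thus ?thesis by (simp flip: power_mult)
  qed
  also have "\<dots> = (b * u) ^ (q ^ (2 * n - s)) * v"
  proof -
    have "(v ^ (q ^ s)) ^ (q ^ (2 * n - s)) = v"
      using q_power_s_complement frob_2n[of v] by (simp flip: power_mult)
    thus ?thesis by (simp add: power_mult_distrib mult_ac)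
  qed
  moreover have "l * H u v = TR (b * u ^ (q ^ s) * v)"
    using Tr_Fq2_linear[OF l, of "a * u ^ (q ^ s) * v"] by (simp add: H_def b_def mult_ac)
  ultimately show ?thesis by (simp add: Bform_def Tr_add[symmetric] distrib_right b_def)
qed

lemma radical_Bform:
  assumes l: "l \<in> Fq2"
  shows "radical (Bform l) UNIV = {u. (l * a) ^ (q ^ s) * u ^ (q ^ (2 * s)) + (l * a) * u = 0}"
proof -
  define b where "b = l * a"
  have "u \<in> radical (Bform l) UNIV \<longleftrightarrow> b * u ^ (q ^ s) + (b * u) ^ (q ^ (2 * n - s)) = 0" for u
  proof -
    have "u \<in> radical (Bform l) UNIV \<longleftrightarrow>
        (\<forall>v. TR ((b * u ^ (q ^ s) + (b * u) ^ (q ^ (2 * n - s))) * v) = 0)"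
      by (simp add: radical_def Bform_eq_Tr[OF l] b_def)
    thus ?thesis using Tr_nondegenerate Tr_zero by auto
  qed
  moreover have "(b * u ^ (q ^ s) + (b * u) ^ (q ^ (2 * n - s))) ^ (q ^ s) =
      b ^ (q ^ s) * u ^ (q ^ (2 * s)) + b * u" for u
  proof -
    have "((b * u) ^ (q ^ (2 * n - s))) ^ (q ^ s) = b * u"
      using frob_2n[of "b * u"] q_power_s_complement by (simp add: mult.commute flip: power_mult)
    moreover have "(b * u ^ (q ^ s)) ^ (q ^ s) = b ^ (q ^ s) * u ^ (q ^ (2 * s))"
      by (simp add: power_mult_distrib mult_2 power_add flip: power_mult)
    ultimately show ?thesis by (simp add: frob_add)
  qed
  moreover have "(w::'a) = 0 \<longleftrightarrow> w ^ (q ^ s) = 0" for w using q_power_pos[of s] by simp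
  ultimately have "u \<in> radical (Bform l) UNIV \<longleftrightarrow> b ^ (q ^ s) * u ^ (q ^ (2 * s)) + b * u = 0" for u
    by metis
  thus ?thesis by (auto simp: b_def)
qed

definition d :: nat where "d = gcd s n"
definition M :: nat where "M = units_order div (q ^ (2 * d) - 1)"

lemma d_eq_dval: "d = dval m n" by (simp add: d_def dval_def s_def)

lemma card_radical_Bform_root:
  assumes l: "l \<in> Fq2" "l \<noteq> 0"
  shows "card (radical (Bform l) UNIV) =
    (if (- ((l * a) / (l * a) ^ (q ^ s))) ^ M = 1 then q ^ (2 * d) else 1)"
proof -
  define b where "b = l * a"
  define c where "c = - (b / b ^ (q ^ s))"
  have b: "b \<noteq> 0" using l a_ne_zero by (simp add: b_def)
  have root: "b ^ (q ^ s) * u ^ (q ^ (2 * s)) + b * u = 0 \<longleftrightarrow> u = 0 \<or> u ^ (q ^ (2 * s) - 1) = c" for u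
  proof (cases "u = 0")
    case False
    obtain e where e: "q ^ (2 * s) = Suc e" using q_power_pos[of "2 * s"] gr0_implies_Suc by blast
    have "b ^ (q ^ s) * u ^ (q ^ (2 * s)) + b * u = u * (b ^ (q ^ s) * u ^ (q ^ (2 * s) - 1) + b)"
      unfolding e by (simp add: algebra_simps)
    also have "\<dots> = 0 \<longleftrightarrow> b ^ (q ^ s) * u ^ (q ^ (2 * s) - 1) = - b"
      using False by (simp add: eq_neg_iff_add_eq_0)
    also have "\<dots> \<longleftrightarrow> u ^ (q ^ (2 * s) - 1) = c"
      using b by (auto simp: c_def field_simps)
    finally show ?thesis using False by simp
  qed (use q_power_pos[of "2 * s"] in simp)
  have "gcd (q ^ (2 * s) - 1) units_order = q ^ (2 * d) - 1"
  proof -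
    have "gcd (q ^ (2 * s) - 1) units_order = q ^ gcd (2 * s) (2 * n) - 1"
      unfolding units_order_def using q_ge_2 by (intro gcd_power_diff_one) auto
    thus ?thesis by (simp add: d_def gcd_mult_distrib_nat)
  qed
  moreover have "radical (Bform l) UNIV = insert 0 {u. u \<noteq> 0 \<and> u ^ (q ^ (2 * s) - 1) = c}"
    using radical_Bform[OF l(1)] root by (auto simp: b_def)
  moreover have "c \<noteq> 0" using b by (simp add: c_def)
  ultimately show ?thesis
    using card_roots[of c "q ^ (2 * s) - 1"] q_power_pos[of "2 * d"] by (simp add: M_def c_def b_def)
qed

definition t :: nat where "t = n div d"

lemma d_pos: "d > 0" using n_pos by (simp add: d_def)
lemma n_eq_d_t: "n = d * t" by (simp add: t_def d_def)
lemma d_le_n: "d \<le> n" using n_pos by (simp add: d_def dvd_imp_le)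
lemma d_le_s: "d \<le> s" by (simp add: d_def gcd_le1_nat s_def)

lemma d_odd: "odd d"
proof -
  have "d dvd s" by (simp add: d_def)
  thus ?thesis by (metis dvd_trans even_mult_iff odd_one s_def dvd_add_right_iff dvd_triv_left)
qed

lemma M_eq_sum: "M = (\<Sum>j<t. q ^ (2 * d * j))"
proof -
  have "q ^ (2 * d) > q ^ 0" using q_ge_2 d_pos by (intro power_strict_increasing) auto
  moreover have "units_order = (q ^ (2 * d)) ^ t - 1"
    using n_eq_d_t by (simp add: units_order_def mult.assoc flip: power_mult)
  ultimately show ?thesis
    using nat_power_diff_one_eq[of "q ^ (2 * d)" t] by (simp add: M_def power_mult)
qed

lemma Fq2_power_M: "z \<in> Fq2 \<Longrightarrow> z ^ M = z ^ t"
proof -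
  assume z: "z \<in> Fq2"
  have "z ^ M = (\<Prod>j<t. z ^ (q ^ (2 * (d * j))))" unfolding M_eq_sum by (simp add: power_sum mult.assoc)
  also have "\<dots> = (\<Prod>j<t. z)" using Fq2_frob_even[OF z] by simp
  finally show ?thesis by simp
qed

lemma alpha_eq: "alpha q n m a = (- (a ^ (q ^ s - 1))) ^ M"
  by (simp add: alpha_def M_def units_order_def d_eq_dval s_def)

definition large_radical :: "'a \<Rightarrow> bool" where
  "large_radical l \<longleftrightarrow> alpha q n m a * (l ^ (q - 1)) ^ t = 1"

lemma large_radical_iff:
  assumes l: "l \<in> Fq2" "l \<noteq> 0"
  shows "(- ((l * a) / (l * a) ^ (q ^ s))) ^ M = 1 \<longleftrightarrow> large_radical l"
proof -
  have "l ^ (q ^ s) = l ^ q" using Fq2_frob_odd[OF l(1), of m] by (simp add: s_def)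
  hence "inverse (- ((l * a) / (l * a) ^ (q ^ s))) = - ((l ^ q / l) * (a ^ (q ^ s) / a))"
    using l a_ne_zero by (simp add: power_mult_distrib field_simps)
  also have "l ^ q / l = l ^ (q - 1)" using l q_ge_2 by (simp add: power_diff)
  also have "a ^ (q ^ s) / a = a ^ (q ^ s - 1)"
    using a_ne_zero Suc_leI[OF q_power_pos[of s]] by (simp add: power_diff)
  finally have inv: "inverse (- ((l * a) / (l * a) ^ (q ^ s))) = l ^ (q - 1) * (- (a ^ (q ^ s - 1)))"
    by simp
  have "(- ((l * a) / (l * a) ^ (q ^ s))) ^ M = 1 \<longleftrightarrow>
      (inverse (- ((l * a) / (l * a) ^ (q ^ s)))) ^ M = 1"
    by (simp only: power_inverse inverse_eq_1_iff)
  also have "\<dots> \<longleftrightarrow> (l ^ (q - 1)) ^ M * (- (a ^ (q ^ s - 1))) ^ M = 1"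
    unfolding inv by (simp only: power_mult_distrib)
  also have "(l ^ (q - 1)) ^ M = (l ^ (q - 1)) ^ t" using Fq2_power_M[OF Fq2_power[OF l(1)]] .
  finally show ?thesis by (simp add: large_radical_def alpha_eq mult.commute)
qed

lemma card_radical_Bform:
  assumes l: "l \<in> Fq2" "l \<noteq> 0"
  shows "card (radical (Bform l) UNIV) = (if large_radical l then q ^ (2 * d) else 1)"
  using card_radical_Bform_root[OF l] large_radical_iff[OF l] by simp

definition Z :: "'a \<Rightarrow> nat" where "Z l = card (level (Bform l) UNIV 0)"

definition defect :: "'a \<Rightarrow> int" where
  "defect l = (if large_radical l then (-1) ^ (n - d) * int q ^ (n + d) else (-1) ^ n * int q ^ n)"

lemma card_isotropic_Bform:
  assumes l: "l \<in> Fq2" "l \<noteq> 0"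
  shows "int q * int (Z l) = int q ^ (2 * n) + (int q - 1) * defect l"
proof -
  obtain r where r: "q ^ (2 * n) = card (radical (Bform l) UNIV) * q ^ (2 * r)"
    "int q * int (Z l) = int q ^ (2 * n) +
       (-1) ^ r * (int q - 1) * int q ^ r * int (card (radical (Bform l) UNIV))"
    using hermitian_isotropic_count[OF Fq2_subspace_UNIV hermitian_Bform[OF l(1)]] card_field
    unfolding Z_def by auto
  show ?thesis
  proof (cases "large_radical l")
    case True
    hence "q ^ (2 * n) = q ^ (2 * d + 2 * r)" using r(1) card_radical_Bform[OF l] by (simp add: power_add)
    hence "r = n - d" using q_ge_2 by (simp add: power_inject_exp)
    moreover have "int q ^ (n - d) * int q ^ (2 * d) = int q ^ (n + d)"
      using d_le_n by (simp add: ac_simps flip: power_add)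
    ultimately show ?thesis
      using r(2) True card_radical_Bform[OF l] by (simp add: defect_def ac_simps)
  next
    case False
    hence "q ^ (2 * n) = q ^ (2 * r)" using r(1) card_radical_Bform[OF l] by simp
    hence "r = n" using q_ge_2 by (simp add: power_inject_exp)
    thus ?thesis using r(2) False card_radical_Bform[OF l] by (simp add: defect_def ac_simps)
  qed
qed

lemma card_level_Bform:
  assumes l: "l \<in> Fq2" "l \<noteq> 0" and u: "u \<in> Fq" "u \<noteq> 0"
  shows "(int q - 1) * int (card (level (Bform l) UNIV u)) = int q ^ (2 * n) - int (Z l)"
proof -
  have "q ^ (2 * n) = Z l + (q - 1) * card (level (Bform l) UNIV u)"
    using card_level_sum[OF hermitian_Bform[OF l(1)] Fq2_subspace_UNIV u] card_field
    by (simp add: Z_def)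
  hence "int q ^ (2 * n) = int (Z l) + int (q - 1) * int (card (level (Bform l) UNIV u))"
    by (metis of_nat_add of_nat_mult of_nat_power)
  thus ?thesis using q_ge_2 by (simp add: of_nat_diff)
qed

end

context field_q2n begin

definition Fq2_units :: "'a set" where "Fq2_units = Fq2 - {0}"

lemma card_Fq2_units: "card Fq2_units = q ^ 2 - 1"
  using card_Fq2 Fq2_0 by (simp add: Fq2_units_def card_Diff_singleton)

lemma q_sq_minus_one_pos: "q ^ 2 - 1 > 0"
proof -
  have "q ^ 2 > q ^ 0" using q_ge_2 by (intro power_strict_increasing) auto
  thus ?thesis by simp
qed

lemma card_T_zero_units:
  assumes "y \<in> Fq2"
  shows "card {l\<in>Fq2_units. T (l * y) = 0} = (if y = 0 then q ^ 2 - 1 else q - 1)"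
proof (cases "y = 0")
  case False
  have "{l\<in>Fq2_units. T (l * y) = 0} = {l\<in>Fq2. l \<noteq> 0 \<and> T (l * y) = 0}"
    by (auto simp: Fq2_units_def)
  thus ?thesis using card_T_kernel_scaled[OF assms False] False by simp
qed (simp add: T_zero card_Fq2_units)

definition prim_Fq2 :: 'a where "prim_Fq2 = prim ^ (units_order div (q ^ 2 - 1))"

lemma prim_Fq2_power_eq_1_iff: "prim_Fq2 ^ i = 1 \<longleftrightarrow> (q ^ 2 - 1) dvd i"
proof -
  obtain M' where M': "units_order = (q ^ 2 - 1) * M'"
    using q_power_minus_one_dvd[of 2] by (auto elim: dvdE)
  have "M' > 0" using M' units_order_pos by (metis gr0I mult_0_right less_irrefl)
  moreover have "units_order div (q ^ 2 - 1) = M'" using M' q_sq_minus_one_pos by simp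
  ultimately show ?thesis using M' by (simp add: prim_Fq2_def prim_power_eq_1_iff flip: power_mult)
qed

lemma prim_Fq2_powers_eq: "(\<lambda>j. prim_Fq2 ^ j) ` {..<q ^ 2 - 1} = Fq2_units"
proof -
  have "prim_Fq2 \<noteq> 0"
    using cyclic_generator_ne_zero prim_Fq2_power_eq_1_iff q_sq_minus_one_pos by blast
  have "(\<lambda>j. prim_Fq2 ^ j) ` {..<q ^ 2 - 1} \<subseteq> Fq2_units"
  proof clarify
    fix j
    have "(prim_Fq2 ^ j) ^ (q ^ 2 - 1) = 1" using prim_Fq2_power_eq_1_iff by (simp flip: power_mult)
    hence "(prim_Fq2 ^ j) ^ (q ^ 2) = prim_Fq2 ^ j"
      using power_eq_self_iff[of "prim_Fq2 ^ j" "q ^ 2"] q_power_pos[of 2] \<open>prim_Fq2 \<noteq> 0\<close> by simp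
    thus "prim_Fq2 ^ j \<in> Fq2_units" using \<open>prim_Fq2 \<noteq> 0\<close> by (simp add: Fq2_units_def Fq2_def)
  qed
  moreover have "card ((\<lambda>j. prim_Fq2 ^ j) ` {..<q ^ 2 - 1}) = q ^ 2 - 1"
    using inj_on_cyclic_powers[of prim_Fq2 "q ^ 2 - 1"] prim_Fq2_power_eq_1_iff q_sq_minus_one_pos
    by (simp add: card_image)
  ultimately show ?thesis using card_Fq2_units card_subset_eq[of Fq2_units] by (simp add: Fq2_units_def)
qed

lemma card_Fq2_unit_roots:
  assumes "c \<noteq> 0"
  shows "card {l\<in>Fq2_units. l ^ e = c} =
    (if c ^ ((q ^ 2 - 1) div gcd e (q ^ 2 - 1)) = 1 then gcd e (q ^ 2 - 1) else 0)"
proof (cases "c \<in> Fq2")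
  case True
  thus ?thesis
    using card_cyclic_roots[of prim_Fq2 "q ^ 2 - 1" c e] prim_Fq2_power_eq_1_iff
      q_sq_minus_one_pos prim_Fq2_powers_eq assms
    by (simp add: Fq2_units_def)
next
  case False
  have "{l\<in>Fq2_units. l ^ e = c} = {}" using False Fq2_power by (auto simp: Fq2_units_def)
  moreover have "c ^ ((q ^ 2 - 1) div gcd e (q ^ 2 - 1)) \<noteq> 1"
  proof
    assume "c ^ ((q ^ 2 - 1) div gcd e (q ^ 2 - 1)) = 1"
    hence "c ^ (q ^ 2 - 1) = 1"
      by (metis dvd_div_mult_self gcd_dvd2 power_mult power_one)
    hence "c \<in> Fq2" using power_eq_self_iff[OF assms, of "q ^ 2"] q_power_pos[of 2] by (simp add: Fq2_def)
    thus False using False by simp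
  qed
  ultimately show ?thesis by simp
qed

end

context trace_form begin

definition g :: nat where "g = gcd t (q + 1)"

lemma g_eq_gval: "g = gval q n m" by (simp add: g_def gval_def t_def d_eq_dval)

lemma alpha_ne_zero: "alpha q n m a \<noteq> 0" using a_ne_zero by (simp add: alpha_eq)

lemma card_large_radical:
  "card {l\<in>Fq2_units. large_radical l} =
     (if alpha q n m a ^ ((q + 1) div g) = 1 then (q - 1) * g else 0)"
proof -
  let ?e = "(q - 1) * t"
  have "large_radical l \<longleftrightarrow> l ^ ?e = inverse (alpha q n m a)" for l
    using alpha_ne_zero by (auto simp: large_radical_def field_simps simp flip: power_mult)
  hence "card {l\<in>Fq2_units. large_radical l} = card {l\<in>Fq2_units. l ^ ?e = inverse (alpha q n m a)}"
    by simp
  moreover have "gcd ?e (q ^ 2 - 1) = (q - 1) * g"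
    unfolding q_sq_minus_one g_def by (simp add: gcd_mult_distrib_nat)
  moreover have "(q ^ 2 - 1) div ((q - 1) * g) = (q + 1) div g"
    unfolding q_sq_minus_one by (rule div_mult_mult1) (use q_ge_2 in simp)
  ultimately show ?thesis
    using card_Fq2_unit_roots[of "inverse (alpha q n m a)" ?e] alpha_ne_zero
    by (simp add: power_inverse)
qed

definition Tcount :: "'a \<Rightarrow> 'a \<Rightarrow> nat" where "Tcount c l = card {u. T (l * (f u + c)) = 0}"

lemma sum_Tcount:
  assumes c: "c \<in> Fq2"
  shows "(\<Sum>l\<in>Fq2_units. Tcount c l) =
    (q ^ 2 - 1) * card {u. f u + c = 0} + (q - 1) * card {u. f u + c \<noteq> 0}"
proof -
  have "(\<Sum>l\<in>Fq2_units. Tcount c l) =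
      (\<Sum>l\<in>Fq2_units. \<Sum>u\<in>UNIV. (if T (l * (f u + c)) = 0 then 1 else 0))"
    unfolding Tcount_def by (simp add: sum.inter_filter[symmetric])
  also have "\<dots> = (\<Sum>u\<in>UNIV. \<Sum>l\<in>Fq2_units. (if T (l * (f u + c)) = 0 then 1 else 0))"
    by (rule sum.swap)
  also have "\<dots> = (\<Sum>u\<in>UNIV. (if f u + c = 0 then q ^ 2 - 1 else q - 1))"
    using card_T_zero_units[OF Fq2_add[OF f_in_Fq2 c]]
    by (intro sum.cong refl) (simp add: sum.inter_filter[symmetric] Fq2_units_def)
  also have "\<dots> = (q ^ 2 - 1) * card {u. f u + c = 0} + (q - 1) * card {u. f u + c \<noteq> 0}"
    by (simp add: sum.If_cases Int_def Collect_neg_eq[symmetric] mult.commute)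
  finally show ?thesis .
qed

lemma Tcount_eq:
  assumes l: "l \<in> Fq2_units" and c: "c \<in> Fq2"
  shows "int q * int (Tcount c l) =
    int q ^ (2 * n) + (if T (l * c) = 0 then int q - 1 else -1) * defect l"
proof -
  have l': "l \<in> Fq2" "l \<noteq> 0" using l by (auto simp: Fq2_units_def)
  have level_eq: "{u. T (l * (f u + c)) = 0} = level (Bform l) UNIV (- T (l * c))"
    by (auto simp: level_def Bform_diag distrib_left T_add eq_neg_iff_add_eq_0)
  show ?thesis
  proof (cases "T (l * c) = 0")
    case True
    thus ?thesis using card_isotropic_Bform[OF l'] level_eq by (simp add: Tcount_def Z_def)
  next
    case False
    have "- T (l * c) \<in> Fq" using T_in_Fq[OF Fq2_mult[OF l'(1) c]] Fq_neg by blast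
    hence "(int q - 1) * int (Tcount c l) = int q ^ (2 * n) - int (Z l)"
      using card_level_Bform[OF l'] level_eq False by (simp add: Tcount_def)
    have "(int q - 1) * (int q * int (Tcount c l)) = int q * ((int q - 1) * int (Tcount c l))"
      by (simp add: algebra_simps)
    also have "\<dots> = int q * int q ^ (2 * n) - int q * int (Z l)"
      unfolding \<open>(int q - 1) * int (Tcount c l) = _\<close> by (simp add: right_diff_distrib)
    also have "\<dots> = (int q - 1) * (int q ^ (2 * n) - defect l)"
      unfolding card_isotropic_Bform[OF l'] by (simp add: algebra_simps)
    finally have "(int q - 1) * (int q * int (Tcount c l)) = (int q - 1) * (int q ^ (2 * n) - defect l)" .
    thus ?thesis using False q_ge_2 by simp
  qed
qed

lemma defect_eq: "defect l = (-1) ^ n * int q ^ n * (if large_radical l then - (int q ^ d) else 1)"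
proof -
  have "(-1::int) ^ n = (-1) ^ (n - d) * (-1) ^ d" using d_le_n by (simp flip: power_add)
  thus ?thesis using d_odd by (simp add: defect_def power_add)
qed

lemma sum_defect:
  assumes "finite S"
  shows "(\<Sum>l\<in>S. defect l) =
     (-1) ^ n * int q ^ n * (int (card S) - int (card {l\<in>S. large_radical l}) * (int q ^ d + 1))"
proof -
  have "defect l = (-1) ^ n * int q ^ n * (1 - (if large_radical l then int q ^ d + 1 else 0))" for l
    by (simp add: defect_eq)
  hence "(\<Sum>l\<in>S. defect l) =
      (-1) ^ n * int q ^ n * (\<Sum>l\<in>S. 1 - (if large_radical l then int q ^ d + 1 else 0))"
    by (simp add: sum_distrib_left)
  also have "(\<Sum>l\<in>S. 1 - (if large_radical l then int q ^ d + 1 else 0)) =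
      int (card S) - int (card {l\<in>S. large_radical l}) * (int q ^ d + 1)"
    using assms by (simp add: sum_subtractf sum.inter_filter[symmetric])
  finally show ?thesis .
qed

end

context trace_form begin

lemma count_via_defect_sums:
  assumes c: "c \<in> Fq2"
  shows "int q ^ 2 * (int q - 1) * int (card {u. f u + c = 0}) =
    (int q - 1) * int q ^ (2 * n) + int q * (\<Sum>l\<in>{l\<in>Fq2_units. T (l * c) = 0}. defect l) -
      (\<Sum>l\<in>Fq2_units. defect l)"
proof -
  define total where "total = int q ^ (2 * n)"
  define N0 where "N0 = int (card {u. f u + c = 0})"
  define A0 where "A0 = (\<Sum>l\<in>{l\<in>Fq2_units. T (l * c) = 0}. defect l)"
  define A where "A = (\<Sum>l\<in>Fq2_units. defect l)"
  have "{u. f u + c \<noteq> 0} = UNIV - {u. f u + c = 0}" by auto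
  moreover have "card {u. f u + c = 0} \<le> q ^ (2 * n)"
    using card_mono[of UNIV "{u. f u + c = 0}"] card_field by simp
  ultimately have "int (card {u. f u + c \<noteq> 0}) = total - N0"
    using card_field by (simp add: card_Diff_subset of_nat_diff total_def N0_def)
  hence count: "int (\<Sum>l\<in>Fq2_units. Tcount c l) = (int q ^ 2 - 1) * N0 + (int q - 1) * (total - N0)"
    using sum_Tcount[OF c] q_ge_2 q_power_pos[of 2] by (simp add: of_nat_diff N0_def)
  have "(if P then int q - 1 else -1) * x = (if P then int q * x else 0) - x" for P x
    by (simp add: algebra_simps)
  hence "int q * int (\<Sum>l\<in>Fq2_units. Tcount c l) =
      (\<Sum>l\<in>Fq2_units. total + ((if T (l * c) = 0 then int q * defect l else 0) - defect l))"
    using Tcount_eq c by (simp add: sum_distrib_left total_def)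
  also have "\<dots> = (int q ^ 2 - 1) * total + int q * A0 - A"
    using card_Fq2_units q_power_pos[of 2]
    by (simp add: sum.distrib sum_subtractf sum_distrib_left sum.inter_filter[symmetric]
        of_nat_diff A0_def A_def)
  finally have "int q * ((int q ^ 2 - 1) * N0 + (int q - 1) * (total - N0)) = (int q ^ 2 - 1) * total + int q * A0 - A"
    unfolding count .
  moreover have "int q ^ 2 * (int q - 1) * N0 =
      int q * ((int q ^ 2 - 1) * N0 + (int q - 1) * (total - N0)) - (int q ^ 2 - 1) * total + (int q - 1) * total"
    by (simp add: algebra_simps power2_eq_square)
  ultimately show ?thesis by (simp add: total_def N0_def A0_def A_def)
qed

lemma large_radical_iff_if_T_zero:
  assumes l: "l \<in> Fq2_units" and c: "c \<noteq> 0" and T_zero: "T (l * c) = 0"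
  shows "large_radical l \<longleftrightarrow> (- (c ^ (q - 1))) ^ t = alpha q n m a"
proof -
  have l': "l \<noteq> 0" using l by (simp add: Fq2_units_def)
  have "q = Suc (q - 1)" using q_ge_2 by simp
  hence "(l * c) ^ q = (l * c) * (l ^ (q - 1) * c ^ (q - 1))"
    by (metis power_Suc power_mult_distrib mult.assoc mult.left_commute)
  hence "l * c + (l * c) * (l ^ (q - 1) * c ^ (q - 1)) = 0" using T_zero by (simp add: T_def)
  hence "(l * c) * (1 + l ^ (q - 1) * c ^ (q - 1)) = 0" by (simp add: algebra_simps)
  hence "1 + l ^ (q - 1) * c ^ (q - 1) = 0" using l' c by simp
  hence "l ^ (q - 1) = inverse (- (c ^ (q - 1)))"
    using c by (simp add: field_simps eq_neg_iff_add_eq_0 add.commute)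
  hence "large_radical l \<longleftrightarrow> alpha q n m a * inverse ((- (c ^ (q - 1))) ^ t) = 1"
    by (simp only: large_radical_def power_inverse)
  also have "\<dots> \<longleftrightarrow> (- (c ^ (q - 1))) ^ t = alpha q n m a"
    using c by (auto simp: field_simps)
  finally show ?thesis .
qed

lemma card_T_zero_large_radical:
  assumes c: "c \<in> Fq2" "c \<noteq> 0"
  shows "card {l\<in>{l\<in>Fq2_units. T (l * c) = 0}. large_radical l} =
    (if (- (c ^ (q - 1))) ^ t = alpha q n m a then q - 1 else 0)"
proof -
  have "{l\<in>{l\<in>Fq2_units. T (l * c) = 0}. large_radical l} =
      (if (- (c ^ (q - 1))) ^ t = alpha q n m a then {l\<in>Fq2_units. T (l * c) = 0} else {})"
    using large_radical_iff_if_T_zero[OF _ c(2)] by auto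
  thus ?thesis using card_T_zero_units[OF c(1)] c(2) by simp
qed

definition Q_int :: int where "Q_int = int q + 1 - int g * (int q ^ d + 1)"

definition scaled_dev :: "'a \<Rightarrow> int" where
  "scaled_dev c = (-1) ^ n * int q ^ n *
    (if alpha q n m a ^ ((q + 1) div g) = 1 then
       (if c = 0 then (int q - 1) * Q_int
        else if (- (c ^ (q - 1))) ^ t = alpha q n m a then - (int q ^ (d + 1)) - Q_int
        else int q - Q_int)
     else (if c = 0 then int q ^ 2 - 1 else - 1))"

lemma scaled_dev_eq_counts:
  assumes c: "c \<in> Fq2"
  shows "(int q - 1) * scaled_dev c = (-1) ^ n * int q ^ n *
    (int q * (int (card {l\<in>Fq2_units. T (l * c) = 0}) -
        int (card {l\<in>{l\<in>Fq2_units. T (l * c) = 0}. large_radical l}) * (int q ^ d + 1)) -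
      (int q ^ 2 - 1 - int (card {l\<in>Fq2_units. large_radical l}) * (int q ^ d + 1)))"
proof -
  define \<sigma> where "\<sigma> = (-1::int) ^ n * int q ^ n"
  define Zc where "Zc = int (card {l\<in>Fq2_units. T (l * c) = 0})"
  define D where "D = int (card {l\<in>Fq2_units. large_radical l})"
  define D0 where "D0 = int (card {l\<in>{l\<in>Fq2_units. T (l * c) = 0}. large_radical l})"
  have D_eq: "D = (if alpha q n m a ^ ((q + 1) div g) = 1 then (int q - 1) * int g else 0)"
    using card_large_radical q_ge_2 by (simp add: D_def of_nat_diff)
  have "(int q - 1) * scaled_dev c = \<sigma> * (int q * (Zc - D0 * (int q ^ d + 1)) - (int q ^ 2 - 1 - D * (int q ^ d + 1)))"
  proof (cases "c = 0")
    case True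
    hence Zc: "Zc = int q ^ 2 - 1" and D0: "D0 = D"
      using card_T_zero_units[OF c] q_power_pos[of 2] T_zero
      by (simp_all add: Zc_def D_def D0_def of_nat_diff)
    show ?thesis unfolding Zc D0 using True D_eq
      by (simp add: scaled_dev_def Q_int_def \<sigma>_def algebra_simps power2_eq_square)
  next
    case False
    have Zc: "Zc = int q - 1"
      using card_T_zero_units[OF c] False q_ge_2 by (simp add: Zc_def of_nat_diff)
    have D0: "D0 = (if (- (c ^ (q - 1))) ^ t = alpha q n m a then int q - 1 else 0)"
      using card_T_zero_large_radical[OF c False] q_ge_2 by (simp add: D0_def of_nat_diff)
    show ?thesis
    proof (cases "alpha q n m a ^ ((q + 1) div g) = 1")
      case True
      hence D: "D = (int q - 1) * int g" using D_eq by simp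
      show ?thesis unfolding Zc D0 D using True False
        by (simp add: scaled_dev_def Q_int_def \<sigma>_def algebra_simps power2_eq_square)
    next
      case not_cond: False
      have "D0 \<le> D" unfolding D_def D0_def by (intro of_nat_mono card_mono) auto
      hence "D0 = 0" using D_eq D0 not_cond q_ge_2 by (auto split: if_splits)
      thus ?thesis unfolding Zc using False not_cond D_eq
        by (simp add: scaled_dev_def \<sigma>_def algebra_simps power2_eq_square)
    qed
  qed
  thus ?thesis by (simp add: \<sigma>_def Zc_def D_def D0_def)
qed

lemma scaled_count_eq:
  assumes c: "c \<in> Fq2"
  shows "int q ^ 2 * int (card {u. f u + c = 0}) = int q ^ (2 * n) + scaled_dev c"
proof -
  let ?Z = "{l\<in>Fq2_units. T (l * c) = 0}"
  have "(int q - 1) * (int q ^ 2 * int (card {u. f u + c = 0})) =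
      (int q - 1) * int q ^ (2 * n) + (int q - 1) * scaled_dev c"
    unfolding scaled_dev_eq_counts[OF c]
    using count_via_defect_sums[OF c] sum_defect[of ?Z] sum_defect[of Fq2_units] card_Fq2_units
      q_power_pos[of 2]
    by (simp add: of_nat_diff algebra_simps)
  thus ?thesis using q_ge_2 by (simp flip: distrib_left)
qed

lemma Ncount_deviation:
  assumes c: "c \<in> Fq2"
  shows "real (Ncount q n m a c) - real q ^ (2 * (n - 1)) = real_of_int (scaled_dev c) / real q ^ 2"
proof -
  have "real_of_int (int q ^ 2 * int (Ncount q n m a c)) = real_of_int (int q ^ (2 * n) + scaled_dev c)"
    using scaled_count_eq[OF c] by (simp add: Ncount_def f_def)
  hence "real q ^ 2 * real (Ncount q n m a c) = real q ^ (2 * n) + real_of_int (scaled_dev c)" by simp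
  moreover have "real q ^ (2 * (n - 1)) * real q ^ 2 = real q ^ (2 * n)"
  proof -
    have "2 * n = 2 * (n - 1) + 2" using n_pos by simp
    thus ?thesis by (metis power_add)
  qed
  ultimately show ?thesis using q_ge_2 by (simp add: field_simps)
qed

end

context trace_form begin

lemma Ncount_deviation_cases:
  assumes c: "c \<in> Fq2"
  shows "(alpha q n m a ^ ((q + 1) div gval q n m) = 1 \<longrightarrow>
      real (Ncount q n m a c) - real q ^ (2 * (n - 1)) =
        (if c = 0 then (-1) ^ n * (real q - 1) * real q powi (int n - 2) * Qval q n m
         else if (- (c ^ (q - 1))) ^ (n div dval m n) = alpha q n m a
         then (-1) ^ (n - 1) * real q ^ (n + dval m n - 1) + (-1) ^ (n - 1) * real q powi (int n - 2) * Qval q n m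
         else (-1) ^ n * real q ^ (n - 1) + (-1) ^ (n - 1) * real q powi (int n - 2) * Qval q n m))
    \<and> (alpha q n m a ^ ((q + 1) div gval q n m) \<noteq> 1 \<longrightarrow>
      real (Ncount q n m a c) - real q ^ (2 * (n - 1)) =
        (if c = 0 then (-1) ^ n * (real q ^ 2 - 1) * real q powi (int n - 2)
         else (-1) ^ (n - 1) * real q powi (int n - 2)))"
proof -
  have q: "real q \<noteq> 0" using q_ge_2 by simp
  have powi: "real q powi (int n - 2) = real q ^ n / real q ^ 2"
    using q by (simp add: power_int_diff)
  have sign: "(-1::real) ^ (n - 1) = - ((-1) ^ n)"
    using n_pos by (cases n) auto
  have power_d: "real q ^ (n + d - 1) = real q ^ n * real q ^ d * real q / real q ^ 2"
    using power_diff[OF q, of 2 "n + d + 1"] n_pos by (simp add: power_add)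
  have power_1: "real q ^ (n - 1) = real q ^ n * real q / real q ^ 2"
    using power_diff[OF q, of 2 "n + 1"] n_pos by simp
  have Qval: "Qval q n m = real_of_int Q_int"
    by (simp add: Qval_def Q_int_def g_eq_gval d_eq_dval)
  show ?thesis
    unfolding Ncount_deviation[OF c] scaled_dev_def g_eq_gval[symmetric] d_eq_dval[symmetric]
      t_def[symmetric] powi sign power_d power_1 Qval
    using q by (simp add: field_simps)
qed

lemma abs_Q_int_eq_iff: "\<bar>Q_int\<bar> = int (q + 1) * int q ^ s \<longleftrightarrow> g = q + 1 \<and> d = s"
proof -
  have g: "1 \<le> g" "g \<le> q + 1" by (simp_all add: g_def Suc_le_eq gcd_le2_nat)
  have "int q ^ 1 \<le> int q ^ d" using power_increasing[of 1 d "int q"] d_pos q_ge_2 by simp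
  moreover have "int q ^ d \<le> int q ^ s" using power_increasing[OF d_le_s, of "int q"] q_ge_2 by simp
  ultimately have qd: "int q \<le> int q ^ d" "int q ^ d \<le> int q ^ s" by simp_all
  have "int q + 1 \<le> int q ^ d + 1" using qd by simp
  also have "\<dots> \<le> int g * (int q ^ d + 1)"
    using mult_right_mono[of 1 "int g" "int q ^ d + 1"] g qd q_ge_2 by simp
  finally have "Q_int \<le> 0" by (simp add: Q_int_def)
  hence abs_Q: "\<bar>Q_int\<bar> = int g * (int q ^ d + 1) - (int q + 1)" by (simp add: Q_int_def)
  show ?thesis
  proof
    assume h: "\<bar>Q_int\<bar> = int (q + 1) * int q ^ s"
    have "g = q + 1"
    proof (rule ccontr)
      assume "g \<noteq> q + 1"
      hence "int g * (int q ^ d + 1) \<le> int q * (int q ^ d + 1)"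
        using g by (intro mult_right_mono) auto
      moreover have "(int q + 1) * int q ^ d \<le> (int q + 1) * int q ^ s"
        using qd by (intro mult_left_mono) auto
      ultimately show False using h abs_Q qd q_ge_2 by (simp add: algebra_simps)
    qed
    have "(int q + 1) * int q ^ d = int g * (int q ^ d + 1) - (int q + 1)"
      using \<open>g = q + 1\<close> by (simp add: algebra_simps)
    also have "\<dots> = (int q + 1) * int q ^ s" using h abs_Q by simp
    finally have "int q ^ d = int q ^ s" using q_ge_2 by simp
    thus "g = q + 1 \<and> d = s" using \<open>g = q + 1\<close> q_ge_2 by (simp add: power_inject_exp)
  next
    assume "g = q + 1 \<and> d = s"
    thus "\<bar>Q_int\<bar> = int (q + 1) * int q ^ s" using abs_Q by (simp add: algebra_simps)
  qed
qed

lemma s_pos: "s > 0" by (simp add: s_def)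

lemma s_times_q_plus_one_dvd_iff: "s * (q + 1) dvd n \<longleftrightarrow> d = s \<and> g = q + 1"
proof
  assume h: "s * (q + 1) dvd n"
  hence "s dvd n" by (rule dvd_mult_left)
  hence d: "d = s" by (simp add: d_def gcd_nat.absorb1)
  obtain w where "n = s * (q + 1) * w" using h unfolding dvd_def by blast
  hence n: "n = s * ((q + 1) * w)" by (metis mult.assoc)
  have "t = n div s" using d by (simp add: t_def)
  also have "\<dots> = (q + 1) * w" using s_pos by (subst n) simp
  finally have "t = (q + 1) * w" .
  hence "g = q + 1" unfolding g_def by (metis gcd_nat.absorb2 dvd_triv_left)
  thus "d = s \<and> g = q + 1" using d by simp
next
  assume "d = s \<and> g = q + 1"
  moreover have "(q + 1) dvd t" if "g = q + 1" using that by (metis g_def gcd_dvd1)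
  ultimately show "s * (q + 1) dvd n" using n_eq_d_t by (metis mult_dvd_mono dvd_refl)
qed

lemma abs_scaled_dev_zero_eq_iff:
  "\<bar>scaled_dev 0\<bar> = (int q ^ 2 - 1) * int q ^ (n + s) \<longleftrightarrow> alpha q n m a = 1 \<and> g = q + 1 \<and> d = s"
proof (cases "alpha q n m a ^ ((q + 1) div g) = 1")
  case True
  have scaled_dev: "\<bar>scaled_dev 0\<bar> = ((int q - 1) * int q ^ n) * \<bar>Q_int\<bar>"
    using True q_ge_2 by (simp add: scaled_dev_def abs_mult)
  have bound: "(int q ^ 2 - 1) * int q ^ (n + s) = ((int q - 1) * int q ^ n) * (int (q + 1) * int q ^ s)"
    by (simp add: power_add power2_eq_square algebra_simps)
  have "(int q - 1) * int q ^ n \<noteq> 0" using q_ge_2 by simp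
  hence "\<bar>scaled_dev 0\<bar> = (int q ^ 2 - 1) * int q ^ (n + s) \<longleftrightarrow> \<bar>Q_int\<bar> = int (q + 1) * int q ^ s"
    unfolding scaled_dev bound by (rule mult_left_cancel)
  also have "\<dots> \<longleftrightarrow> g = q + 1 \<and> d = s" by (rule abs_Q_int_eq_iff)
  also have "\<dots> \<longleftrightarrow> alpha q n m a = 1 \<and> g = q + 1 \<and> d = s" using True by auto
  finally show ?thesis .
next
  case False
  have "\<bar>scaled_dev 0\<bar> = (int q ^ 2 - 1) * int q ^ n"
    using False q_ge_2 by (simp add: scaled_dev_def abs_mult power2_eq_square)
  moreover have "int q ^ 2 - 1 > 0" using one_less_power[of "int q" 2] q_ge_2 by simp
  hence "(int q ^ 2 - 1) * int q ^ n < (int q ^ 2 - 1) * int q ^ (n + s)"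
    using q_ge_2 by (intro mult_strict_left_mono power_strict_increasing) (auto simp: s_def)
  ultimately show ?thesis using False by auto
qed

lemma Ncount_zero_extremal_iff:
  "\<bar>real (Ncount q n m a 0) - real q ^ (2 * (n - 1))\<bar> = (real q ^ 2 - 1) * real q ^ (n + 2 * m - 1)
    \<longleftrightarrow> (2 * m + 1) * (q + 1) dvd n \<and> alpha q n m a = 1"
proof -
  have q: "real q \<noteq> 0" using q_ge_2 by simp
  have power_s: "real q ^ (n + 2 * m - 1) = real q ^ (n + s) / real q ^ 2"
    using power_diff[OF q, of 2 "n + s"] n_pos by (simp add: s_def)
  have "\<bar>real (Ncount q n m a 0) - real q ^ (2 * (n - 1))\<bar> = (real q ^ 2 - 1) * real q ^ (n + 2 * m - 1)
      \<longleftrightarrow> \<bar>real_of_int (scaled_dev 0)\<bar> / real q ^ 2 = (real q ^ 2 - 1) * real q ^ (n + s) / real q ^ 2"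
    unfolding Ncount_deviation[OF Fq2_0] power_s by (simp add: abs_divide)
  also have "\<dots> \<longleftrightarrow> \<bar>real_of_int (scaled_dev 0)\<bar> = (real q ^ 2 - 1) * real q ^ (n + s)"
    using q by (simp add: divide_cancel_right)
  also have "\<dots> \<longleftrightarrow> \<bar>scaled_dev 0\<bar> = (int q ^ 2 - 1) * int q ^ (n + s)"
  proof -
    have "real_of_int ((int q ^ 2 - 1) * int q ^ (n + s)) = (real q ^ 2 - 1) * real q ^ (n + s)"
      by simp
    thus ?thesis by (metis of_int_abs of_int_eq_iff)
  qed
  also have "\<dots> \<longleftrightarrow> alpha q n m a = 1 \<and> g = q + 1 \<and> d = s" by (rule abs_scaled_dev_zero_eq_iff)
  also have "\<dots> \<longleftrightarrow> (2 * m + 1) * (q + 1) dvd n \<and> alpha q n m a = 1"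
    using s_times_q_plus_one_dvd_iff by (auto simp: s_def)
  finally show ?thesis .
qed

end

theorem proposition4p4:
  fixes q n m :: nat and a :: "'a::{finite,field}"
  assumes q_pp: "\<exists>p k. prime p \<and> k > 0 \<and> q = p ^ k"
    and card_F: "card (UNIV :: 'a set) = q ^ (2 * n)"
    and n_pos: "n > 0"
    and m_le: "m \<le> n - 1"
    and a_nz: "a \<noteq> 0"
  shows
    "(\<forall>c::'a. c ^ (q ^ 2) = c \<longrightarrow>
       (alpha q n m a ^ ((q + 1) div gval q n m) = 1 \<longrightarrow>
         real (Ncount q n m a c) - real q ^ (2 * (n - 1)) =
           (if c = 0 then (-1) ^ n * (real q - 1) * real q powi (int n - 2) * Qval q n m
            else if (- (c ^ (q - 1))) ^ (n div dval m n) = alpha q n m a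
            then (-1) ^ (n - 1) * real q ^ (n + dval m n - 1) + (-1) ^ (n - 1) * real q powi (int n - 2) * Qval q n m
            else (-1) ^ n * real q ^ (n - 1) + (-1) ^ (n - 1) * real q powi (int n - 2) * Qval q n m))
       \<and> (alpha q n m a ^ ((q + 1) div gval q n m) \<noteq> 1 \<longrightarrow>
         real (Ncount q n m a c) - real q ^ (2 * (n - 1)) =
           (if c = 0 then (-1) ^ n * (real q ^ 2 - 1) * real q powi (int n - 2)
            else (-1) ^ (n - 1) * real q powi (int n - 2))))
     \<and> (\<bar>real (Ncount q n m a 0) - real q ^ (2 * (n - 1))\<bar> = (real q ^ 2 - 1) * real q ^ (n + 2 * m - 1)
          \<longleftrightarrow> ((2 * m + 1) * (q + 1) dvd n \<and> alpha q n m a = 1))"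
proof -
  obtain p k where "prime p" "k > 0" "q = p ^ k" using q_pp by blast
  then interpret trace_form q n p k "TYPE('a)" a m
    using card_F n_pos m_le a_nz by unfold_locales auto
  show ?thesis
    using Ncount_deviation_cases Ncount_zero_extremal_iff by (simp add: Fq2_def)
qed

end
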